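(* Let $\mathcal D=[x_{1/2},x_{N_x+1/2}]\times[z_{1/2},z_{N_z+1/2}]$ be partitioned into rectangles $K_{ij}=[x_{i-1/2},x_{i+1/2}]\times[z_{j-1/2},z_{j+1/2}]$, and let $V_h^k$ be the space of functions in $L^2(\mathcal D)$ whose restriction to each $K_{ij}$ is a polynomial of degree at most $k$; $\mathbf V_h^k$ denotes $M$-vectors with entries in $V_h^k$. Let $\mathbf A(\mathbf x)=(a_{kj}(\mathbf x))_{k,j=1}^M$ be a symmetric positive definite matrix function, smooth on each cell (possible discontinuities only along mesh lines), and let $\bar{\mathbf A}$ be the matrix whose $(k,l)$ entry is $\nabla a_{kl}$, so that $(\bar{\mathbf A}\mathbf v)_k=\sum_l v_l\nabla a_{kl}$. Consider the semi-discrete LDG scheme: find $\widehat{\mathbf v}_h(t)\in\mathbf V_h^k$ (twice differentiable in $t$) and $\widehat{\mathbf S}_h(t)\in(\mathbf V_h^k)^2$ (an $M\times 2$ matrix whose columns are in $\mathbf V_h^k$) such that for every cell $K=K_{ij}$ with outward unit normal $\boldsymbol\nu$, $$\int_K \partial_t^2\widehat{\mathbf v}_h\cdot\mathbf p_h\,d\mathbf x+\int_K\mathbf A\widehat{\mathbf S}_h\cdot\nabla\mathbf p_h\,d\mathbf x-\big(\mathbf A^-\widehat{\mathbf S}_h^-\boldsymbol\nu,\mathbf p_h\big)_{\partial K}=0\qquad\forall\mathbf p_h\in\mathbf V_h^k,$$ $$\int_K\widehat{\mathbf S}_h\cdot\mathbf w_h\,d\mathbf x+\int_K\mathbf A\widehat{\mathbf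 v}_h\cdot\operatorname{div}\mathbf w_h\,d\mathbf x+\int_K\bar{\mathbf A}\widehat{\mathbf v}_h\cdot\mathbf w_h\,d\mathbf x-\big(\mathbf A\widehat{\mathbf v}_h^+,\mathbf w_h\boldsymbol\nu\big)_{\partial K}=0\qquad\forall\mathbf w_h\in(\mathbf V_h^k)^2,$$ where in the last boundary term $\mathbf A$ is evaluated from inside $K$, and on each interior edge the superscript $-$ ($+$) denotes the trace from the left/lower (right/upper) neighbouring cell (alternating fluxes), with homogeneous Dirichlet boundary conditions $\widehat{\mathbf v}=0$ on $\partial\mathcal D$. Then the semi-discrete energy $$E_h(t)=\int_{\mathcal D}\Big(\partial_t\widehat{\mathbf v}_h\cdot\partial_t\widehat{\mathbf v}_h+\widehat{\mathbf S}_h\cdot\widehat{\mathbf S}_h\Big)d\mathbf x$$ is conserved by this scheme for all $t>0$, i.e. $\frac{d}{dt}E_h(t)=0$.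
   Context: The scheme discretizes the stochastic Galerkin (generalized polynomial chaos) system $\partial_t^2\widehat{\mathbf v}=\operatorname{div}(\mathbf A\widehat{\mathbf S})$, $\widehat{\mathbf S}=\mathbf A\nabla\widehat{\mathbf v}$ on $\mathcal D$ with $\widehat{\mathbf v}=0$ on $\partial\mathcal D$, where $a_{kj}(\mathbf x)=\int a(\mathbf x,\mathbf y)\Phi_k(\mathbf y)\Phi_j(\mathbf y)\rho(\mathbf y)d\mathbf y$ for orthonormal polynomials $\Phi_m$ with respect to the density $\rho$ of $\mathbf y$. Here "$\cdot$" denotes the Euclidean/Frobenius inner product of vectors or matrices, divergence and gradient act row-wise, and $\mathbf A^-$ is the matrix with entries $a_{kj}^-$. The analogous result holds with the other alternating choice ($\mathbf A^+\widehat{\mathbf S}_h^+$ and $\widehat{\mathbf v}_h^-$). *)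

theory Defs
  imports "HOL-Analysis.Analysis"
begin

text \<open>A DG function in V_h^k is represented by the
family of its polynomial pieces: u i j is the polynomial (defined on the whole plane)
whose restriction to the cell K_ij is the function.  Traces on cell edges are then
evaluations of the appropriate piece.  Cells are indexed from 0:
K_ij = [xs i, xs (i+1)] x [zs j, zs (j+1)], i < Nx, j < Nz
(so xs i is x_{i+1/2} of the paper).  Vector components m < M; matrix columns d < 2
(d = 0: x-direction, d = 1: z-direction).\<close>

definition poly2 :: "nat \<Rightarrow> (real \<times> real \<Rightarrow> real) \<Rightarrow> bool" where
  "poly2 k f \<longleftrightarrow> (\<exists>c :: nat \<Rightarrow> nat \<Rightarrow> real.
      \<forall>x z. f (x, z) = (\<Sum>a\<le>k. \<Sum>b\<le>k - a. c a b * x ^ a * z ^ b))"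

definition pdx :: "(real \<times> real \<Rightarrow> real) \<Rightarrow> real \<times> real \<Rightarrow> real" where
  "pdx f = (\<lambda>(x, z). deriv (\<lambda>s. f (s, z)) x)"

definition pdz :: "(real \<times> real \<Rightarrow> real) \<Rightarrow> real \<times> real \<Rightarrow> real" where
  "pdz f = (\<lambda>(x, z). deriv (\<lambda>s. f (x, s)) z)"

definition pd :: "nat \<Rightarrow> (real \<times> real \<Rightarrow> real) \<Rightarrow> real \<times> real \<Rightarrow> real" where
  "pd d f = (if d = 0 then pdx f else pdz f)"

definition cell :: "(nat \<Rightarrow> real) \<Rightarrow> (nat \<Rightarrow> real) \<Rightarrow> nat \<Rightarrow> nat \<Rightarrow> (real \<times> real) set" where
  "cell xs zs i j = {xs i..xs (Suc i)} \<times> {zs j..zs (Suc j)}"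

definition Vh :: "nat \<Rightarrow> nat \<Rightarrow> nat \<Rightarrow> nat \<Rightarrow>
    (nat \<Rightarrow> nat \<Rightarrow> nat \<Rightarrow> real \<times> real \<Rightarrow> real) \<Rightarrow> bool" where
  "Vh Nx Nz M k p \<longleftrightarrow> (\<forall>i<Nx. \<forall>j<Nz. \<forall>m<M. poly2 k (p i j m))"

definition Vh2 :: "nat \<Rightarrow> nat \<Rightarrow> nat \<Rightarrow> nat \<Rightarrow>
    (nat \<Rightarrow> nat \<Rightarrow> nat \<Rightarrow> nat \<Rightarrow> real \<times> real \<Rightarrow> real) \<Rightarrow> bool" where
  "Vh2 Nx Nz M k w \<longleftrightarrow> (\<forall>i<Nx. \<forall>j<Nz. \<forall>m<M. \<forall>d<2. poly2 k (w i j m d))"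

text \<open>Boundary pairing over the four edges of cell (i,j) with outward normal:
gR, gL are integrands (in z) on the right/left edge of the scalar product
F.p where F is the x-component (normal = (1,0) resp. (-1,0)); gT, gB likewise in x
on the top/bottom edge with the z-component.\<close>
definition bdry :: "(nat \<Rightarrow> real) \<Rightarrow> (nat \<Rightarrow> real) \<Rightarrow> nat \<Rightarrow> nat \<Rightarrow>
    (real \<Rightarrow> real) \<Rightarrow> (real \<Rightarrow> real) \<Rightarrow> (real \<Rightarrow> real) \<Rightarrow> (real \<Rightarrow> real) \<Rightarrow> real" where
  "bdry xs zs i j gR gL gT gB =
      integral {zs j..zs (Suc j)} gR - integral {zs j..zs (Suc j)} gL
    + integral {xs i..xs (Suc i)} gT - integral {xs i..xs (Suc i)} gB"

definition AS :: "nat \<Rightarrow> (nat \<Rightarrow> nat \<Rightarrow> nat \<Rightarrow> nat \<Rightarrow> real \<times> real \<Rightarrow> real) \<Rightarrow>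
    (nat \<Rightarrow> nat \<Rightarrow> nat \<Rightarrow> nat \<Rightarrow> real \<times> real \<Rightarrow> real) \<Rightarrow>
    nat \<Rightarrow> nat \<Rightarrow> nat \<Rightarrow> nat \<Rightarrow> real \<times> real \<Rightarrow> real" where
  "AS M A S i j k d y = (\<Sum>l<M. A i j k l y * S i j l d y)"

text \<open>Flux A^- S^- : from the left (lower) neighbour; on the boundary of D the interior trace.\<close>
definition eq1 :: "nat \<Rightarrow> nat \<Rightarrow> nat \<Rightarrow> (nat \<Rightarrow> real) \<Rightarrow> (nat \<Rightarrow> real) \<Rightarrow>
    (nat \<Rightarrow> nat \<Rightarrow> nat \<Rightarrow> nat \<Rightarrow> real \<times> real \<Rightarrow> real) \<Rightarrow>
    (nat \<Rightarrow> nat \<Rightarrow> nat \<Rightarrow> real \<times> real \<Rightarrow> real) \<Rightarrow>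
    (nat \<Rightarrow> nat \<Rightarrow> nat \<Rightarrow> nat \<Rightarrow> real \<times> real \<Rightarrow> real) \<Rightarrow>
    nat \<Rightarrow> nat \<Rightarrow> (nat \<Rightarrow> nat \<Rightarrow> nat \<Rightarrow> real \<times> real \<Rightarrow> real) \<Rightarrow> bool" where
  "eq1 Nx Nz M xs zs A vtt S i j p \<longleftrightarrow>
    (let iL = (if 0 < i then i - 1 else i); jB = (if 0 < j then j - 1 else j) in
     integral (cell xs zs i j) (\<lambda>y. \<Sum>m<M. vtt i j m y * p i j m y)
     + integral (cell xs zs i j) (\<lambda>y. \<Sum>m<M. \<Sum>d<2. AS M A S i j m d y * pd d (p i j m) y)
     - (\<Sum>m<M. bdry xs zs i j
          (\<lambda>z. AS M A S i j m 0 (xs (Suc i), z) * p i j m (xs (Suc i), z))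
          (\<lambda>z. AS M A S iL j m 0 (xs i, z) * p i j m (xs i, z))
          (\<lambda>x. AS M A S i j m 1 (x, zs (Suc j)) * p i j m (x, zs (Suc j)))
          (\<lambda>x. AS M A S i jB m 1 (x, zs j) * p i j m (x, zs j)))
     = 0)"

text \<open>Second equation on cell (i,j) at a fixed time.  Flux v^+ : from the right (upper)
neighbour; on the boundary of D it is the Dirichlet value 0.  A is taken from inside K.\<close>
definition eq2 :: "nat \<Rightarrow> nat \<Rightarrow> nat \<Rightarrow> (nat \<Rightarrow> real) \<Rightarrow> (nat \<Rightarrow> real) \<Rightarrow>
    (nat \<Rightarrow> nat \<Rightarrow> nat \<Rightarrow> nat \<Rightarrow> real \<times> real \<Rightarrow> real) \<Rightarrow>
    (nat \<Rightarrow> nat \<Rightarrow> nat \<Rightarrow> real \<times> real \<Rightarrow> real) \<Rightarrow>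
    (nat \<Rightarrow> nat \<Rightarrow> nat \<Rightarrow> nat \<Rightarrow> real \<times> real \<Rightarrow> real) \<Rightarrow>
    nat \<Rightarrow> nat \<Rightarrow> (nat \<Rightarrow> nat \<Rightarrow> nat \<Rightarrow> nat \<Rightarrow> real \<times> real \<Rightarrow> real) \<Rightarrow> bool" where
  "eq2 Nx Nz M xs zs A v S i j w \<longleftrightarrow>
    (let vR = (\<lambda>l y. if Suc i < Nx then v (Suc i) j l y else 0);
         vL = (\<lambda>l y. if 0 < i then v i j l y else 0);
         vT = (\<lambda>l y. if Suc j < Nz then v i (Suc j) l y else 0);
         vB = (\<lambda>l y. if 0 < j then v i j l y else 0) in
     integral (cell xs zs i j) (\<lambda>y. \<Sum>m<M. \<Sum>d<2. S i j m d y * w i j m d y)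
     + integral (cell xs zs i j) (\<lambda>y. \<Sum>m<M. (\<Sum>l<M. A i j m l y * v i j l y)
            * (pdx (w i j m 0) y + pdz (w i j m 1) y))
     + integral (cell xs zs i j) (\<lambda>y. \<Sum>m<M. \<Sum>d<2.
            (\<Sum>l<M. v i j l y * pd d (A i j m l) y) * w i j m d y)
     - (\<Sum>m<M. bdry xs zs i j
          (\<lambda>z. (\<Sum>l<M. A i j m l (xs (Suc i), z) * vR l (xs (Suc i), z)) * w i j m 0 (xs (Suc i), z))
          (\<lambda>z. (\<Sum>l<M. A i j m l (xs i, z) * vL l (xs i, z)) * w i j m 0 (xs i, z))
          (\<lambda>x. (\<Sum>l<M. A i j m l (x, zs (Suc j)) * vT l (x, zs (Suc j))) * w i j m 1 (x, zs (Suc j)))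
          (\<lambda>x. (\<Sum>l<M. A i j m l (x, zs j) * vB l (x, zs j)) * w i j m 1 (x, zs j)))
     = 0)"

definition energy :: "nat \<Rightarrow> nat \<Rightarrow> nat \<Rightarrow> (nat \<Rightarrow> real) \<Rightarrow> (nat \<Rightarrow> real) \<Rightarrow>
    (nat \<Rightarrow> nat \<Rightarrow> nat \<Rightarrow> real \<times> real \<Rightarrow> real) \<Rightarrow>
    (nat \<Rightarrow> nat \<Rightarrow> nat \<Rightarrow> nat \<Rightarrow> real \<times> real \<Rightarrow> real) \<Rightarrow> real" where
  "energy Nx Nz M xs zs vt S =
     (\<Sum>i<Nx. \<Sum>j<Nz. integral (cell xs zs i j)
        (\<lambda>y. (\<Sum>m<M. vt i j m y * vt i j m y) + (\<Sum>m<M. \<Sum>d<2. S i j m d y * S i j m d y)))"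

end

theory Submission
  imports Defs "Jordan_Normal_Form.Determinant"
begin

text \<open>Test the first equation with \<open>p = \<partial>\<^sub>t v\<^sub>h\<close> and the time derivative of the second
equation with \<open>w = S\<^sub>h(t)\<close>.  On every cell the sum of the two identities is
\<open>1/2 d/dt \<integral>\<^sub>K |\<partial>\<^sub>t v\<^sub>h|\<^sup>2 + |S\<^sub>h|\<^sup>2\<close> on one side; on the other, since \<open>A\<close> is symmetric, the
volume terms add up to the divergence of the flux \<open>\<Phi>\<^sub>d = (A \<partial>\<^sub>t v\<^sub>h)\<cdot>S\<^sub>h e\<^sub>d\<close>, and after integration
by parts only edge terms are left.  With alternating fluxes the contribution of an edge
to its two neighbouring cells cancels, and on \<open>\<partial>D\<close> it vanishes by the Dirichlet
condition, so the sum over all cells is zero.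

Differentiating under the integral sign needs a little regularity in time: all fields are
polynomials in space whose coefficients are differentiable in time.  For \<open>v\<^sub>h\<close> this follows
from the pointwise derivatives; for \<open>S\<^sub>h\<close>, of which no time derivative is assumed, it follows
from the second equation, which expresses the moments of \<open>S\<^sub>h\<close> against polynomials as linear
functionals of \<open>v\<^sub>h\<close>.\<close>

lemma DERIV_if_const:
  "(P \<Longrightarrow> (f has_real_derivative a) F) \<Longrightarrow> (\<not> P \<Longrightarrow> (g has_real_derivative b) F) \<Longrightarrow>
    ((\<lambda>s. if P then f s else g s) has_real_derivative (if P then a else b)) F"
  by (cases P) auto

lemma continuous_on_if_const:
  "(P \<Longrightarrow> continuous_on K f) \<Longrightarrow> (\<not> P \<Longrightarrow> continuous_on K g) \<Longrightarrow>
    continuous_on K (\<lambda>x. if P then f x else g x)"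
  by (cases P) auto

lemma sum_symmetric_bilinear:
  fixes a :: "nat \<Rightarrow> nat \<Rightarrow> 'a::comm_semiring_1"
  assumes "\<forall>m<M. \<forall>l<M. a m l = a l m"
  shows "(\<Sum>m<M. (\<Sum>l<M. a m l * s l) * u m) = (\<Sum>m<M. (\<Sum>l<M. a m l * u l) * s m)"
proof -
  have "(\<Sum>m<M. (\<Sum>l<M. a m l * s l) * u m) = (\<Sum>l<M. \<Sum>m<M. a m l * s l * u m)"
    unfolding sum_distrib_right by (rule sum.swap)
  also have "\<dots> = (\<Sum>l<M. \<Sum>m<M. a l m * u m * s l)"
    using assms by (intro sum.cong refl) (simp add: mult_ac)
  also have "\<dots> = (\<Sum>m<M. (\<Sum>l<M. a m l * u l) * s m)"
    by (simp add: sum_distrib_right)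
  finally show ?thesis .
qed

lemma sum_minus_previous:
  fixes f :: "nat \<Rightarrow> 'a::ab_group_add"
  shows "(\<Sum>i<n. f i - (if 0 < i then f (i - 1) else 0)) = (if n = 0 then 0 else f (n - 1))"
  by (induction n) (auto simp: not_less_eq)

section \<open>Left inverses of injective matrices\<close>

lemma injective_matrix_left_inverse_nat:
  fixes G :: "nat \<Rightarrow> nat \<Rightarrow> real"
  assumes inj: "\<And>x. \<forall>i<N. (\<Sum>j<N. G i j * x j) = 0 \<Longrightarrow> \<forall>j<N. x j = 0"
  shows "\<exists>H. \<forall>i<N. \<forall>j<N. (\<Sum>l<N. H i l * G l j) = (if i = j then 1 else 0)"
proof -
  define A where "A = mat N N (\<lambda>(i, j). G i j)"
  have A: "A \<in> carrier_mat N N"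
    unfolding A_def by simp
  have "det A \<noteq> 0"
  proof
    assume "det A = 0"
    then obtain u where u: "u \<in> carrier_vec N" "u \<noteq> 0\<^sub>v N" "A *\<^sub>v u = 0\<^sub>v N"
      using det_0_iff_vec_prod_zero[OF A] by auto
    have "(\<Sum>j<N. G i j * u $ j) = (A *\<^sub>v u) $ i" if "i < N" for i
      using that u(1) unfolding A_def by (simp add: scalar_prod_def lessThan_atLeast0)
    with u(3) have "\<forall>i<N. (\<Sum>j<N. G i j * u $ j) = 0"
      by simp
    then have "\<forall>j<N. u $ j = 0"
      by (rule inj)
    then have "u = 0\<^sub>v N"
      using u(1) by (intro eq_vecI) auto
    with u(2) show False ..
  qed
  have adj: "adj_mat A \<in> carrier_mat N N" "adj_mat A * A = det A \<cdot>\<^sub>m 1\<^sub>m N"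
    using adj_mat[OF A] by auto
  show ?thesis
  proof (intro exI allI impI)
    fix i j assume ij: "i < N" "j < N"
    have "(\<Sum>l<N. adj_mat A $$ (i, l) * G l j) = (adj_mat A * A) $$ (i, j)"
      using ij adj(1) unfolding A_def by (simp add: scalar_prod_def lessThan_atLeast0)
    also have "\<dots> = det A * (if i = j then 1 else 0)"
      using ij adj(2) by simp
    finally show "(\<Sum>l<N. adj_mat A $$ (i, l) / det A * G l j) = (if i = j then 1 else 0)"
      using \<open>det A \<noteq> 0\<close> by (simp add: sum_divide_distrib[symmetric])
  qed
qed

lemma injective_matrix_reindex:
  fixes G :: "'i \<Rightarrow> 'i \<Rightarrow> real"
  assumes e: "bij_betw e {..<n} I"
    and inj: "\<And>x. \<forall>i\<in>I. (\<Sum>j\<in>I. G i j * x j) = 0 \<Longrightarrow> \<forall>j\<in>I. x j = 0"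
    and x: "\<forall>p<n. (\<Sum>q<n. G (e p) (e q) * x q) = 0"
  shows "\<forall>q<n. x q = 0"
proof -
  let ?e' = "inv_into {..<n} e"
  have "\<forall>i\<in>I. (\<Sum>j\<in>I. G i j * x (?e' j)) = 0"
  proof
    fix i assume "i \<in> I"
    then have "(\<Sum>j\<in>I. G i j * x (?e' j)) = (\<Sum>q<n. G (e (?e' i)) (e q) * x q)"
      using e by (simp add: bij_betw_inv_into_left bij_betw_inv_into_right flip: sum.reindex_bij_betw[OF e])
    also have "\<dots> = 0"
      using x bij_betwE[OF bij_betw_inv_into[OF e]] \<open>i \<in> I\<close> by blast
    finally show "(\<Sum>j\<in>I. G i j * x (?e' j)) = 0" .
  qed
  then have x0: "\<forall>j\<in>I. x (?e' j) = 0"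
    by (rule inj)
  show ?thesis
  proof (intro allI impI)
    fix q assume "q < n"
    then have "e q \<in> I" "?e' (e q) = q"
      using bij_betwE[OF e] bij_betw_inv_into_left[OF e] by auto
    with x0 show "x q = 0"
      by force
  qed
qed

lemma injective_matrix_left_inverse:
  fixes G :: "'i \<Rightarrow> 'i \<Rightarrow> real"
  assumes "finite I"
    and inj: "\<And>x. \<forall>i\<in>I. (\<Sum>j\<in>I. G i j * x j) = 0 \<Longrightarrow> \<forall>j\<in>I. x j = 0"
  shows "\<exists>H. \<forall>i\<in>I. \<forall>j\<in>I. (\<Sum>l\<in>I. H i l * G l j) = (if i = j then 1 else 0)"
proof -
  obtain e where e: "bij_betw e {..<card I} I"
    using ex_bij_betw_nat_finite[OF \<open>finite I\<close>] by (auto simp: lessThan_atLeast0)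
  let ?e' = "inv_into {..<card I} e"
  obtain H where H: "\<forall>p<card I. \<forall>q<card I. (\<Sum>l<card I. H p l * G (e l) (e q)) = (if p = q then 1 else 0)"
    using injective_matrix_left_inverse_nat[OF injective_matrix_reindex[OF e inj]] ..
  show ?thesis
  proof (intro exI ballI)
    fix i j assume ij: "i \<in> I" "j \<in> I"
    then have "?e' i < card I" "?e' j < card I"
      using bij_betwE[OF bij_betw_inv_into[OF e]] by auto
    moreover have "(\<Sum>l\<in>I. H (?e' i) (?e' l) * G l j) = (\<Sum>q<card I. H (?e' i) q * G (e q) (e (?e' j)))"
      using e ij by (simp add: bij_betw_inv_into_left bij_betw_inv_into_right flip: sum.reindex_bij_betw[OF e])
    moreover have "?e' i = ?e' j \<longleftrightarrow> i = j"
      using e ij by (metis bij_betw_inv_into_right)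
    ultimately show "(\<Sum>l\<in>I. H (?e' i) (?e' l) * G l j) = (if i = j then 1 else 0)"
      using H by simp
  qed
qed

lemma DERIV_injective_linear_system:
  fixes G :: "'i \<Rightarrow> 'i \<Rightarrow> real" and c F :: "real \<Rightarrow> 'i \<Rightarrow> real"
  assumes "finite I"
    and inj: "\<And>x. \<forall>i\<in>I. (\<Sum>j\<in>I. G i j * x j) = 0 \<Longrightarrow> \<forall>j\<in>I. x j = 0"
    and system: "\<forall>\<^sub>F s in nhds t. \<forall>i\<in>I. (\<Sum>j\<in>I. G i j * c s j) = F s i"
    and F_differentiable: "\<And>i. i \<in> I \<Longrightarrow> (\<lambda>s. F s i) differentiable (at t)"
    and "j \<in> I"
  shows "(\<lambda>s. c s j) differentiable (at t)"
proof -
  obtain H where H: "\<forall>i\<in>I. \<forall>j\<in>I. (\<Sum>l\<in>I. H i l * G l j) = (if i = j then 1 else 0)"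
    using injective_matrix_left_inverse[OF \<open>finite I\<close> inj] ..
  have ev: "\<forall>\<^sub>F s in nhds t. (\<Sum>l\<in>I. H j l * F s l) = c s j"
    using system
  proof eventually_elim
    case (elim s)
    have "(\<Sum>l\<in>I. H j l * F s l) = (\<Sum>l\<in>I. H j l * (\<Sum>i\<in>I. G l i * c s i))"
      using elim by (intro sum.cong) auto
    also have "\<dots> = (\<Sum>l\<in>I. \<Sum>i\<in>I. H j l * G l i * c s i)"
      by (simp add: sum_distrib_left mult.assoc)
    also have "\<dots> = (\<Sum>i\<in>I. (\<Sum>l\<in>I. H j l * G l i) * c s i)"
      by (subst sum.swap) (simp add: sum_distrib_right)
    also have "\<dots> = (\<Sum>i\<in>I. if j = i then c s i else 0)"
      using H \<open>j \<in> I\<close> by (intro sum.cong) auto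
    also have "\<dots> = c s j"
      using \<open>finite I\<close> \<open>j \<in> I\<close> by simp
    finally show ?case .
  qed
  have "(\<lambda>s. \<Sum>l\<in>I. H j l * F s l) differentiable (at t)"
    using F_differentiable \<open>finite I\<close> by (auto intro!: derivative_intros)
  then obtain D where "((\<lambda>s. \<Sum>l\<in>I. H j l * F s l) has_real_derivative D) (at t)"
    unfolding real_differentiable_def ..
  then show ?thesis
    unfolding real_differentiable_def using iffD1[OF DERIV_cong_ev[OF refl ev refl]] by blast
qed

section \<open>Families of finite rank\<close>

text \<open>Near \<open>s = t\<close>, \<open>h s y\<close> is a finite sum \<open>\<Sum>\<^sub>p a\<^sub>p(s) g\<^sub>p(y)\<close> with \<open>a\<^sub>p\<close> differentiable at \<open>t\<close> and
\<open>g\<^sub>p\<close> continuous on \<open>K\<close>; for such families the derivative in \<open>s\<close> commutes with integration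
over \<open>K\<close>.\<close>

inductive finite_rank_near :: "real \<Rightarrow> 'a::euclidean_space set \<Rightarrow> (real \<Rightarrow> 'a \<Rightarrow> real) \<Rightarrow> bool"
  for t :: real and K :: "'a set"
where
  finite_rank_near_scaled:
    "(a has_real_derivative a') (at t) \<Longrightarrow> continuous_on K g \<Longrightarrow> finite_rank_near t K (\<lambda>s y. a s * g y)"
| finite_rank_near_zero: "finite_rank_near t K (\<lambda>s y. 0)"
| finite_rank_near_add:
    "finite_rank_near t K h1 \<Longrightarrow> finite_rank_near t K h2 \<Longrightarrow>
     finite_rank_near t K (\<lambda>s y. h1 s y + h2 s y)"
| finite_rank_near_eventually_eq:
    "finite_rank_near t K h \<Longrightarrow> \<forall>\<^sub>F s in nhds t. \<forall>y\<in>K. h' s y = h s y \<Longrightarrow> finite_rank_near t K h'"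

lemma finite_rank_near_cong:
  assumes "finite_rank_near t K h" "\<And>s y. y \<in> K \<Longrightarrow> h' s y = h s y"
  shows "finite_rank_near t K h'"
  using assms by (auto intro: finite_rank_near_eventually_eq)

lemma finite_rank_near_const:
  assumes "continuous_on K g"
  shows "finite_rank_near t K (\<lambda>s y. g y)"
  using finite_rank_near_scaled[where a="\<lambda>_. 1" and a'=0, OF DERIV_const assms] by simp

lemma finite_rank_near_if:
  assumes "P \<Longrightarrow> finite_rank_near t K h1" "\<not> P \<Longrightarrow> finite_rank_near t K h2"
  shows "finite_rank_near t K (\<lambda>s y. if P then h1 s y else h2 s y)"
  using assms by (cases P) auto

lemma finite_rank_near_sum:
  assumes "\<And>m. m \<in> A \<Longrightarrow> finite_rank_near t K (h m)"
  shows "finite_rank_near t K (\<lambda>s y. \<Sum>m\<in>A. h m s y)"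
  using assms
proof (induction A rule: infinite_finite_induct)
  case (insert m A)
  then show ?case
    by (simp add: finite_rank_near_add)
qed (simp_all add: finite_rank_near_zero)

lemma finite_rank_near_scaled_mult:
  assumes "finite_rank_near t K h"
    and "(a has_real_derivative a') (at t)" "continuous_on K g"
  shows "finite_rank_near t K (\<lambda>s y. a s * g y * h s y)"
  using assms(1)
proof induction
  case (finite_rank_near_scaled b b' f)
  have "finite_rank_near t K (\<lambda>s y. (a s * b s) * (g y * f y))"
    using DERIV_mult[OF assms(2) finite_rank_near_scaled(1)]
      continuous_on_mult[OF assms(3) finite_rank_near_scaled(2)]
    by (rule finite_rank_near.finite_rank_near_scaled)
  then show ?case
    by (rule finite_rank_near_cong) (simp add: mult_ac)
next
  case finite_rank_near_zero
  then show ?case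
    by (simp add: finite_rank_near.finite_rank_near_zero)
next
  case (finite_rank_near_add h1 h2)
  from finite_rank_near_add.IH have "finite_rank_near t K (\<lambda>s y. a s * g y * h1 s y + a s * g y * h2 s y)"
    by (rule finite_rank_near.finite_rank_near_add)
  then show ?case
    by (rule finite_rank_near_cong) (simp add: distrib_left)
next
  case (finite_rank_near_eventually_eq h h')
  then show ?case
    by (elim finite_rank_near.finite_rank_near_eventually_eq) (auto elim: eventually_mono)
qed

lemma finite_rank_near_mult:
  assumes "finite_rank_near t K h1" "finite_rank_near t K h2"
  shows "finite_rank_near t K (\<lambda>s y. h1 s y * h2 s y)"
  using assms(1)
proof induction
  case (finite_rank_near_scaled a a' g)
  then show ?case
    using finite_rank_near_scaled_mult[OF assms(2)] by blast
next
  case (finite_rank_near_eventually_eq h h')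
  then show ?case
    by (elim finite_rank_near.finite_rank_near_eventually_eq) (auto elim: eventually_mono)
next
  case finite_rank_near_zero
  then show ?case
    by (simp add: finite_rank_near.finite_rank_near_zero)
next
  case (finite_rank_near_add g1 g2)
  from finite_rank_near_add.IH have "finite_rank_near t K (\<lambda>s y. g1 s y * h2 s y + g2 s y * h2 s y)"
    by (rule finite_rank_near.finite_rank_near_add)
  then show ?case
    by (rule finite_rank_near_cong) (simp add: distrib_right)
qed

lemma finite_rank_near_compose:
  assumes "finite_rank_near t K h" "continuous_on K' \<phi>" "\<phi> ` K' \<subseteq> K"
  shows "finite_rank_near t K' (\<lambda>s y. h s (\<phi> y))"
  using assms(1)
proof induction
  case (finite_rank_near_scaled a a' g)
  show ?case
    using finite_rank_near_scaled(1) continuous_on_compose2[OF finite_rank_near_scaled(2) assms(2,3)]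
    by (rule finite_rank_near.finite_rank_near_scaled)
next
  case (finite_rank_near_eventually_eq h h')
  have "\<forall>\<^sub>F s in nhds t. \<forall>y\<in>K'. h' s (\<phi> y) = h s (\<phi> y)"
    using finite_rank_near_eventually_eq.hyps(2) by eventually_elim (use assms(3) in blast)
  with finite_rank_near_eventually_eq.IH show ?case
    by (rule finite_rank_near.finite_rank_near_eventually_eq)
next
  case (finite_rank_near_add h1 h2)
  then show ?case
    by (intro finite_rank_near.finite_rank_near_add)
qed (rule finite_rank_near.finite_rank_near_zero)

lemma finite_rank_near_coeffs:
  assumes "finite I"
    and "\<And>p. p \<in> I \<Longrightarrow> (\<lambda>s. c s p) differentiable (at t)"
    and "\<And>p. p \<in> I \<Longrightarrow> continuous_on K (g p)"
    and "\<forall>\<^sub>F s in nhds t. \<forall>y\<in>K. h s y = (\<Sum>p\<in>I. c s p * g p y)"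
  shows "finite_rank_near t K h"
proof (rule finite_rank_near_eventually_eq[OF finite_rank_near_sum assms(4)])
  fix p assume "p \<in> I"
  then obtain D where "((\<lambda>s. c s p) has_real_derivative D) (at t)"
    using assms(2) unfolding real_differentiable_def by blast
  then show "finite_rank_near t K (\<lambda>s y. c s p * g p y)"
    using assms(3)[OF \<open>p \<in> I\<close>] by (rule finite_rank_near_scaled)
qed

lemma finite_rank_near_derivative:
  assumes "finite_rank_near t K h"
  shows "\<exists>h'. continuous_on K h' \<and> (\<forall>y\<in>K. ((\<lambda>s. h s y) has_real_derivative h' y) (at t)) \<and>
    (\<forall>\<^sub>F s in nhds t. continuous_on K (h s))"
  using assms
proof induction
  case (finite_rank_near_scaled a a' g)
  then show ?case
    by (intro exI[of _ "\<lambda>y. a' * g y"]) (auto intro!: continuous_intros derivative_eq_intros always_eventually)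
next
  case finite_rank_near_zero
  show ?case
    by (intro exI[of _ "\<lambda>y. 0"]) auto
next
  case (finite_rank_near_add h1 h2)
  then obtain h1' h2' where "continuous_on K h1'" "\<forall>y\<in>K. ((\<lambda>s. h1 s y) has_real_derivative h1' y) (at t)"
      "\<forall>\<^sub>F s in nhds t. continuous_on K (h1 s)"
    and "continuous_on K h2'" "\<forall>y\<in>K. ((\<lambda>s. h2 s y) has_real_derivative h2' y) (at t)"
      "\<forall>\<^sub>F s in nhds t. continuous_on K (h2 s)"
    by blast
  then show ?case
    by (intro exI[of _ "\<lambda>y. h1' y + h2' y"])
      (auto intro!: continuous_intros derivative_intros elim: eventually_elim2)
next
  case (finite_rank_near_eventually_eq h h')
  then obtain h'' where h'': "continuous_on K h''" "\<forall>y\<in>K. ((\<lambda>s. h s y) has_real_derivative h'' y) (at t)"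
      "\<forall>\<^sub>F s in nhds t. continuous_on K (h s)"
    by blast
  have ev: "\<forall>\<^sub>F s in nhds t. \<forall>y\<in>K. h s y = h' s y"
    using finite_rank_near_eventually_eq(2) by (auto elim: eventually_mono)
  have "((\<lambda>s. h' s y) has_real_derivative h'' y) (at t)" if "y \<in> K" for y
  proof -
    have "\<forall>\<^sub>F s in nhds t. h s y = h' s y"
      using ev that by (auto elim: eventually_mono)
    from iffD1[OF DERIV_cong_ev[OF refl this refl]] show ?thesis
      using h''(2) that by blast
  qed
  moreover have "\<forall>\<^sub>F s in nhds t. continuous_on K (h' s)"
    using ev h''(3) by eventually_elim (auto cong: continuous_on_cong)
  ultimately show ?case
    using h''(1) by blast
qed

lemma finite_rank_near_differentiable:
  assumes "finite_rank_near t K h" "y \<in> K"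
  shows "(\<lambda>s. h s y) differentiable (at t)"
  using finite_rank_near_derivative[OF assms(1)] assms(2) unfolding real_differentiable_def by blast

lemma finite_rank_near_derivative_continuous:
  assumes "finite_rank_near t K h" "\<And>y. y \<in> K \<Longrightarrow> ((\<lambda>s. h s y) has_real_derivative h' y) (at t)"
  shows "continuous_on K h'"
proof -
  obtain h'' where "continuous_on K h''" "\<forall>y\<in>K. ((\<lambda>s. h s y) has_real_derivative h'' y) (at t)"
    using finite_rank_near_derivative[OF assms(1)] by blast
  with assms(2) show ?thesis
    by (metis DERIV_unique continuous_on_cong)
qed

lemma has_real_derivative_integral_finite_rank:
  assumes "finite_rank_near t (cbox a b) h"
    and "\<And>y. y \<in> cbox a b \<Longrightarrow> ((\<lambda>s. h s y) has_real_derivative h' y) (at t)"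
  shows "((\<lambda>s. integral (cbox a b) (h s)) has_real_derivative integral (cbox a b) h') (at t)"
  using assms
proof (induction arbitrary: h')
  case (finite_rank_near_scaled c c' g)
  have "h' y = c' * g y" if "y \<in> cbox a b" for y
    using DERIV_unique[OF finite_rank_near_scaled.prems[OF that] DERIV_cmult_right[OF finite_rank_near_scaled.hyps(1)]] .
  then have "integral (cbox a b) h' = c' * integral (cbox a b) g"
    by (simp cong: integral_cong)
  then show ?case
    using DERIV_cmult_right[OF finite_rank_near_scaled.hyps(1), of "integral (cbox a b) g"] by simp
next
  case finite_rank_near_zero
  have "h' y = 0" if "y \<in> cbox a b" for y
    using DERIV_unique[OF finite_rank_near_zero[OF that] DERIV_const] .
  then have "integral (cbox a b) h' = 0"
    by (simp cong: integral_cong)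
  then show ?case
    by simp
next
  case (finite_rank_near_add h1 h2)
  obtain h1' h2' where h1': "continuous_on (cbox a b) h1'" "\<forall>y\<in>cbox a b. ((\<lambda>s. h1 s y) has_real_derivative h1' y) (at t)"
      "\<forall>\<^sub>F s in nhds t. continuous_on (cbox a b) (h1 s)"
    and h2': "continuous_on (cbox a b) h2'" "\<forall>y\<in>cbox a b. ((\<lambda>s. h2 s y) has_real_derivative h2' y) (at t)"
      "\<forall>\<^sub>F s in nhds t. continuous_on (cbox a b) (h2 s)"
    using finite_rank_near_derivative[OF finite_rank_near_add.hyps(1)]
      finite_rank_near_derivative[OF finite_rank_near_add.hyps(2)] by blast
  have "\<forall>\<^sub>F s in nhds t. integral (cbox a b) (h1 s) + integral (cbox a b) (h2 s) = integral (cbox a b) (\<lambda>y. h1 s y + h2 s y)"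
    using h1'(3) h2'(3) by eventually_elim (simp add: integral_add integrable_continuous)
  moreover have "integral (cbox a b) h' = integral (cbox a b) h1' + integral (cbox a b) h2'"
    using h1' h2' finite_rank_near_add.prems
    by (subst integral_add[symmetric]) (auto intro!: integral_cong integrable_continuous DERIV_unique[OF _ DERIV_add])
  ultimately show ?case
    using DERIV_add[OF finite_rank_near_add.IH(1) finite_rank_near_add.IH(2)] h1'(2) h2'(2)
    by (simp add: DERIV_cong_ev)
next
  case (finite_rank_near_eventually_eq h h'')
  have "((\<lambda>s. h s y) has_real_derivative h' y) (at t)" if "y \<in> cbox a b" for y
  proof -
    have "\<forall>\<^sub>F s in nhds t. h'' s y = h s y"
      using finite_rank_near_eventually_eq.hyps(2) that by (auto elim: eventually_mono)
    from iffD1[OF DERIV_cong_ev[OF refl this refl]] show ?thesis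
      using finite_rank_near_eventually_eq.prems that by blast
  qed
  then have "((\<lambda>s. integral (cbox a b) (h s)) has_real_derivative integral (cbox a b) h') (at t)"
    by (rule finite_rank_near_eventually_eq.IH)
  moreover have "\<forall>\<^sub>F s in nhds t. integral (cbox a b) (h s) = integral (cbox a b) (h'' s)"
    using finite_rank_near_eventually_eq.hyps(2) by eventually_elim (auto intro: integral_cong)
  ultimately show ?case
    by (simp add: DERIV_cong_ev)
qed

section \<open>Polynomials of total degree at most \<open>k\<close>\<close>

definition mono_exps :: "nat \<Rightarrow> (nat \<times> nat) set" where
  "mono_exps k = Sigma {..k} (\<lambda>a. {..k - a})"

definition monomial2 :: "nat \<times> nat \<Rightarrow> real \<times> real \<Rightarrow> real" where
  "monomial2 p y = fst y ^ fst p * snd y ^ snd p"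

lemma finite_mono_exps [simp]: "finite (mono_exps k)"
  unfolding mono_exps_def by auto

lemma continuous_on_monomial2 [continuous_intros]: "continuous_on S (monomial2 p)"
  unfolding monomial2_def by (intro continuous_intros)

lemma monomial2_sum_eq:
  "(\<Sum>p\<in>mono_exps k. c p * monomial2 p (x, z)) = (\<Sum>a\<le>k. \<Sum>b\<le>k - a. c (a, b) * x ^ a * z ^ b)"
  unfolding mono_exps_def monomial2_def by (simp add: sum.Sigma mult.assoc split_def)

lemma poly2_iff_monomial2_sum:
  "poly2 k f \<longleftrightarrow> (\<exists>c. f = (\<lambda>y. \<Sum>p\<in>mono_exps k. c p * monomial2 p y))"
proof
  assume "poly2 k f"
  then obtain c where c: "\<And>x z. f (x, z) = (\<Sum>a\<le>k. \<Sum>b\<le>k - a. c a b * x ^ a * z ^ b)"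
    unfolding poly2_def by blast
  show "\<exists>c. f = (\<lambda>y. \<Sum>p\<in>mono_exps k. c p * monomial2 p y)"
    by (rule exI[of _ "\<lambda>(a, b). c a b"]) (auto simp: c monomial2_sum_eq)
next
  assume "\<exists>c. f = (\<lambda>y. \<Sum>p\<in>mono_exps k. c p * monomial2 p y)"
  then obtain c where "f = (\<lambda>y. \<Sum>p\<in>mono_exps k. c p * monomial2 p y)" ..
  then show "poly2 k f"
    unfolding poly2_def by (intro exI[of _ "\<lambda>a b. c (a, b)"]) (simp add: monomial2_sum_eq)
qed

lemma poly2_monomial2_sum: "poly2 k (\<lambda>y. \<Sum>p\<in>mono_exps k. c p * monomial2 p y)"
  unfolding poly2_iff_monomial2_sum by blast

lemma poly2_monomial2:
  assumes "p \<in> mono_exps k"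
  shows "poly2 k (monomial2 p)"
  unfolding poly2_iff_monomial2_sum
proof (intro exI ext)
  fix y
  have "(\<Sum>q\<in>mono_exps k. (if q = p then 1 else 0) * monomial2 q y)
      = (\<Sum>q\<in>mono_exps k. if q = p then monomial2 q y else 0)"
    by (intro sum.cong) auto
  also have "\<dots> = monomial2 p y"
    using assms by simp
  finally show "monomial2 p y = (\<Sum>q\<in>mono_exps k. (if q = p then 1 else 0) * monomial2 q y)" ..
qed

lemma poly2_zero: "poly2 k (\<lambda>y. 0)"
  using poly2_monomial2_sum[of k "\<lambda>_. 0"] by simp

lemma continuous_on_poly2:
  assumes "poly2 k f"
  shows "continuous_on S f"
  using assms unfolding poly2_iff_monomial2_sum by (auto intro!: continuous_intros)

lemma poly2_pdx:
  assumes "poly2 k f"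
  shows "((\<lambda>s. f (s, z)) has_real_derivative pdx f (x, z)) (at x)"
    and "continuous_on S (pdx f)"
proof -
  obtain c where f: "f = (\<lambda>y. \<Sum>p\<in>mono_exps k. c p * monomial2 p y)"
    using assms unfolding poly2_iff_monomial2_sum by blast
  define D where "D y = (\<Sum>p\<in>mono_exps k. c p * (real (fst p) * fst y ^ (fst p - 1) * snd y ^ snd p))"
    for y :: "real \<times> real"
  have D: "((\<lambda>s. f (s, z)) has_real_derivative D (x, z)) (at x)" for x z
    unfolding f D_def monomial2_def by (auto intro!: derivative_eq_intros sum.cong simp: mult_ac)
  have "pdx f = D"
    unfolding pdx_def using DERIV_imp_deriv[OF D] by auto
  then show "((\<lambda>s. f (s, z)) has_real_derivative pdx f (x, z)) (at x)" "continuous_on S (pdx f)"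
    using D unfolding D_def by (auto intro!: continuous_intros)
qed

lemma poly2_pdz:
  assumes "poly2 k f"
  shows "((\<lambda>s. f (x, s)) has_real_derivative pdz f (x, z)) (at z)"
    and "continuous_on S (pdz f)"
proof -
  obtain c where f: "f = (\<lambda>y. \<Sum>p\<in>mono_exps k. c p * monomial2 p y)"
    using assms unfolding poly2_iff_monomial2_sum by blast
  define D where "D y = (\<Sum>p\<in>mono_exps k. c p * (fst y ^ fst p * (real (snd p) * snd y ^ (snd p - 1))))"
    for y :: "real \<times> real"
  have D: "((\<lambda>s. f (x, s)) has_real_derivative D (x, z)) (at z)" for x z
    unfolding f D_def monomial2_def by (auto intro!: derivative_eq_intros sum.cong simp: mult_ac)
  have "pdz f = D"
    unfolding pdz_def using DERIV_imp_deriv[OF D] by auto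
  then show "((\<lambda>s. f (x, s)) has_real_derivative pdz f (x, z)) (at z)" "continuous_on S (pdz f)"
    using D unfolding D_def by (auto intro!: continuous_intros)
qed

lemma continuous_on_poly2_compose:
  assumes "poly2 k f" "continuous_on K \<phi>"
  shows "continuous_on K (\<lambda>y. f (\<phi> y))"
    and "continuous_on K (\<lambda>y. pdx f (\<phi> y))"
    and "continuous_on K (\<lambda>y. pdz f (\<phi> y))"
    and "continuous_on K (\<lambda>y. pd d f (\<phi> y))"
  using continuous_on_compose2[OF continuous_on_poly2[OF assms(1)] assms(2) subset_UNIV]
    continuous_on_compose2[OF poly2_pdx(2)[OF assms(1)] assms(2) subset_UNIV]
    continuous_on_compose2[OF poly2_pdz(2)[OF assms(1)] assms(2) subset_UNIV]
  by (auto simp: pd_def)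

lemma polyfun_eq_0_on_large_set:
  fixes c :: "nat \<Rightarrow> real"
  assumes "finite X" "n < card X" "\<And>x. x \<in> X \<Longrightarrow> (\<Sum>i\<le>n. c i * x ^ i) = 0"
  shows "\<forall>i\<le>n. c i = 0"
proof (rule ccontr)
  assume "\<not> (\<forall>i\<le>n. c i = 0)"
  then obtain i where "i \<le> n" "c i \<noteq> 0" by blast
  then have "finite {x. (\<Sum>i\<le>n. c i * x ^ i) = 0}" "card {x. (\<Sum>i\<le>n. c i * x ^ i) = 0} \<le> n"
    using polyfun_roots_finite polyfun_roots_card by blast+
  moreover have "X \<subseteq> {x. (\<Sum>i\<le>n. c i * x ^ i) = 0}"
    using assms(3) by blast
  ultimately have "card X \<le> n"
    using card_mono order_trans by blast
  with assms(2) show False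
    by simp
qed

lemma monomial2_coeffs_eq_0_on_grid:
  assumes "finite X" "k < card X" "finite Z" "k < card Z"
    and "\<And>x z. x \<in> X \<Longrightarrow> z \<in> Z \<Longrightarrow> (\<Sum>p\<in>mono_exps k. c p * monomial2 p (x, z)) = 0"
  shows "\<forall>p\<in>mono_exps k. c p = 0"
proof -
  have "(\<Sum>p\<in>mono_exps k. c p * monomial2 p (x, z)) = (\<Sum>a\<le>k. (\<Sum>b\<le>k - a. c (a, b) * z ^ b) * x ^ a)"
    for x z
    by (simp add: monomial2_sum_eq sum_distrib_left sum_distrib_right mult_ac)
  then have "\<forall>a\<le>k. (\<Sum>b\<le>k - a. c (a, b) * z ^ b) = 0" if "z \<in> Z" for z
    using polyfun_eq_0_on_large_set[OF assms(1,2), of "\<lambda>a. \<Sum>b\<le>k - a. c (a, b) * z ^ b"] assms(5) that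
    by simp
  then have "\<forall>b\<le>k - a. c (a, b) = 0" if "a \<le> k" for a
    using polyfun_eq_0_on_large_set[OF assms(3), of "k - a" "\<lambda>b. c (a, b)"] assms(4) that by simp
  then show ?thesis
    unfolding mono_exps_def by auto
qed

lemma monomial2_coeffs_eq_0:
  assumes "\<And>y. (\<Sum>p\<in>mono_exps k. c p * monomial2 p y) = 0"
  shows "\<forall>p\<in>mono_exps k. c p = 0"
proof -
  have "card (real ` {..k}) = Suc k"
    by (simp add: card_image)
  then show ?thesis
    using monomial2_coeffs_eq_0_on_grid[of "real ` {..k}" k "real ` {..k}"] assms by simp
qed

lemma poly2_eq_0_on_grid:
  assumes "poly2 k f" "finite X" "k < card X" "finite Z" "k < card Z"
    and "\<And>x z. x \<in> X \<Longrightarrow> z \<in> Z \<Longrightarrow> f (x, z) = 0"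
  shows "f y = 0"
proof -
  obtain c where f: "f = (\<lambda>y. \<Sum>p\<in>mono_exps k. c p * monomial2 p y)"
    using assms(1) unfolding poly2_iff_monomial2_sum by blast
  have "\<forall>p\<in>mono_exps k. c p = 0"
    using assms(2-6) unfolding f by (rule monomial2_coeffs_eq_0_on_grid)
  then show ?thesis
    unfolding f by simp
qed

lemma poly2_eq_0_if_grid_sums_eq_0:
  assumes f: "poly2 k f" and X: "finite X" "k < card X"
    and sums: "\<forall>p\<in>mono_exps k. (\<Sum>y\<in>X \<times> X. monomial2 p y * f y) = 0"
  shows "f y = 0"
proof -
  obtain c where c: "f = (\<lambda>y. \<Sum>p\<in>mono_exps k. c p * monomial2 p y)"
    using f unfolding poly2_iff_monomial2_sum by blast
  have "(\<Sum>y\<in>X \<times> X. (f y)\<^sup>2) = (\<Sum>p\<in>mono_exps k. c p * (\<Sum>y\<in>X \<times> X. monomial2 p y * f y))"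
    unfolding power2_eq_square
    by (subst (1) c) (simp add: sum_distrib_left sum_distrib_right mult_ac sum.swap[of _ "X \<times> X"])
  with sums have "(\<Sum>y\<in>X \<times> X. (f y)\<^sup>2) = 0"
    by simp
  then have "\<forall>y\<in>X \<times> X. f y = 0"
    using X(1) by (simp add: sum_nonneg_eq_0_iff)
  then show "f y = 0"
    using poly2_eq_0_on_grid[OF f X(1,2) X(1,2)] by simp
qed

lemma integral_monomial2_sum:
  assumes "continuous_on (cbox a b) g"
  shows "integral (cbox a b) (\<lambda>y. (\<Sum>r\<in>mono_exps k. c r * monomial2 r y) * g y)
    = (\<Sum>r\<in>mono_exps k. c r * integral (cbox a b) (\<lambda>y. monomial2 r y * g y))"
  using assms
  by (simp add: sum_distrib_right mult.assoc, subst integral_sum)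
     (auto intro!: integrable_continuous continuous_intros)

lemma poly2_eq_0_if_cell_moments_eq_0:
  fixes x0 x1 z0 z1 :: real
  assumes f: "poly2 k f" and "x0 < x1" "z0 < z1"
    and moments: "\<forall>p\<in>mono_exps k. integral (cbox (x0, z0) (x1, z1)) (\<lambda>y. monomial2 p y * f y) = 0"
  shows "f y = 0"
proof -
  let ?K = "cbox (x0, z0) (x1, z1)"
  obtain c where c: "f = (\<lambda>y. \<Sum>p\<in>mono_exps k. c p * monomial2 p y)"
    using f unfolding poly2_iff_monomial2_sum by blast
  have "integral ?K (\<lambda>y. (f y)\<^sup>2) = (\<Sum>p\<in>mono_exps k. c p * integral ?K (\<lambda>y. monomial2 p y * f y))"
    unfolding power2_eq_square
    by (subst (1) c) (rule integral_monomial2_sum[OF continuous_on_poly2[OF f]])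
  with moments have "integral ?K (\<lambda>y. (f y)\<^sup>2) = 0"
    by simp
  moreover have "box (x0, z0) (x1, z1) \<noteq> {}"
    using assms(2,3) by (simp add: box_ne_empty inner_Pair_0 Basis_prod_def)
  ultimately have f0: "\<forall>y\<in>?K. f y = 0"
    using integral_cbox_eq_0_iff[of "(x0, z0)" "(x1, z1)" "\<lambda>y. (f y)\<^sup>2"] continuous_on_poly2[OF f]
    by (auto intro!: continuous_intros)
  obtain X where X: "finite X" "card X = Suc k" "X \<subseteq> {x0..x1}"
    using infinite_arbitrarily_large infinite_Icc[OF assms(2)] by blast
  obtain Z where Z: "finite Z" "card Z = Suc k" "Z \<subseteq> {z0..z1}"
    using infinite_arbitrarily_large infinite_Icc[OF assms(3)] by blast
  have "f (x, z) = 0" if "x \<in> X" "z \<in> Z" for x z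
    using f0 X(3) Z(3) that unfolding cbox_Pair_eq by (auto simp: cbox_interval)
  then show "f y = 0"
    using poly2_eq_0_on_grid[OF f X(1) _ Z(1)] X(2) Z(2) by simp
qed

text \<open>The coefficients of \<open>q s\<close> solve the linear system with matrix \<open>L p (monomial2 r)\<close> and
right-hand side \<open>L p (q s)\<close>; unisolvence makes the matrix injective.\<close>

lemma finite_rank_near_poly2_functionals:
  fixes q :: "real \<Rightarrow> real \<times> real \<Rightarrow> real" and L :: "nat \<times> nat \<Rightarrow> (real \<times> real \<Rightarrow> real) \<Rightarrow> real"
  assumes poly: "\<forall>\<^sub>F s in nhds t. poly2 k (q s)"
    and linear: "\<And>p c. L p (\<lambda>y. \<Sum>r\<in>mono_exps k. c r * monomial2 r y)
        = (\<Sum>r\<in>mono_exps k. c r * L p (monomial2 r))"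
    and unisolvent: "\<And>f y. poly2 k f \<Longrightarrow> \<forall>p\<in>mono_exps k. L p f = 0 \<Longrightarrow> f y = 0"
    and differentiable: "\<And>p. p \<in> mono_exps k \<Longrightarrow> (\<lambda>s. L p (q s)) differentiable (at t)"
  shows "finite_rank_near t UNIV q"
proof -
  define c where "c s = (SOME c. q s = (\<lambda>y. \<Sum>p\<in>mono_exps k. c p * monomial2 p y))" for s
  have "q s = (\<lambda>y. \<Sum>p\<in>mono_exps k. c s p * monomial2 p y)" if "poly2 k (q s)" for s
    using that unfolding c_def poly2_iff_monomial2_sum by (rule someI_ex)
  with poly have c: "\<forall>\<^sub>F s in nhds t. q s = (\<lambda>y. \<Sum>p\<in>mono_exps k. c s p * monomial2 p y)"
    by (auto elim: eventually_mono)
  have system: "\<forall>\<^sub>F s in nhds t. \<forall>p\<in>mono_exps k.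
      (\<Sum>r\<in>mono_exps k. L p (monomial2 r) * c s r) = L p (q s)"
    using c by eventually_elim (simp add: linear; simp add: mult.commute)
  have "\<forall>r\<in>mono_exps k. x r = 0"
    if "\<forall>p\<in>mono_exps k. (\<Sum>r\<in>mono_exps k. L p (monomial2 r) * x r) = 0" for x
  proof (rule monomial2_coeffs_eq_0)
    fix y
    show "(\<Sum>r\<in>mono_exps k. x r * monomial2 r y) = 0"
      using that by (intro unisolvent poly2_monomial2_sum) (simp add: linear mult.commute)
  qed
  then have c_differentiable: "(\<lambda>s. c s p) differentiable (at t)" if "p \<in> mono_exps k" for p
    using DERIV_injective_linear_system[OF finite_mono_exps _ system differentiable that] by blast
  show ?thesis
  proof (rule finite_rank_near_coeffs[where I="mono_exps k" and c=c and g=monomial2])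
    show "\<forall>\<^sub>F s in nhds t. \<forall>y\<in>UNIV. q s y = (\<Sum>p\<in>mono_exps k. c s p * monomial2 p y)"
      using c by eventually_elim simp
  qed (auto intro: continuous_intros c_differentiable)
qed

lemma finite_rank_near_poly2:
  fixes q :: "real \<Rightarrow> real \<times> real \<Rightarrow> real"
  assumes "\<forall>\<^sub>F s in nhds t. poly2 k (q s)" "\<And>y. (\<lambda>s. q s y) differentiable (at t)"
  shows "finite_rank_near t UNIV q"
proof -
  define X where "X = real ` {..k}"
  have X: "finite X" "k < card X"
    unfolding X_def by (simp_all add: card_image)
  show ?thesis
  proof (rule finite_rank_near_poly2_functionals[where L="\<lambda>p f. \<Sum>y\<in>X \<times> X. monomial2 p y * f y"])
    show "(\<Sum>y\<in>X \<times> X. monomial2 p y * (\<Sum>r\<in>mono_exps k. c r * monomial2 r y))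
        = (\<Sum>r\<in>mono_exps k. c r * (\<Sum>y\<in>X \<times> X. monomial2 p y * monomial2 r y))" for p c
      by (simp add: sum_distrib_left mult_ac sum.swap[of _ "X \<times> X"])
  qed (use assms X poly2_eq_0_if_grid_sums_eq_0 in \<open>auto intro!: derivative_intros\<close>)
qed

lemma finite_rank_near_poly2_moments:
  fixes q :: "real \<Rightarrow> real \<times> real \<Rightarrow> real" and x0 x1 z0 z1 :: real
  assumes "\<forall>\<^sub>F s in nhds t. poly2 k (q s)" "x0 < x1" "z0 < z1"
    and "\<And>p. p \<in> mono_exps k \<Longrightarrow>
      (\<lambda>s. integral (cbox (x0, z0) (x1, z1)) (\<lambda>y. monomial2 p y * q s y)) differentiable (at t)"
  shows "finite_rank_near t UNIV q"
proof (rule finite_rank_near_poly2_functionals[where L="\<lambda>p f. integral (cbox (x0, z0) (x1, z1)) (\<lambda>y. monomial2 p y * f y)"])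
  show "integral (cbox (x0, z0) (x1, z1)) (\<lambda>y. monomial2 p y * (\<Sum>r\<in>mono_exps k. c r * monomial2 r y))
      = (\<Sum>r\<in>mono_exps k. c r * integral (cbox (x0, z0) (x1, z1)) (\<lambda>y. monomial2 p y * monomial2 r y))" for p c
    using integral_monomial2_sum[where a="(x0, z0)" and b="(x1, z1)" and g="monomial2 p" and k=k and c=c]
    by (simp add: mult.commute continuous_on_monomial2)
qed (use assms poly2_eq_0_if_cell_moments_eq_0 in auto)

section \<open>Calculus on rectangles\<close>

lemma integral_real_derivative:
  fixes f f' :: "real \<Rightarrow> real"
  assumes "a \<le> b" "\<And>x. x \<in> {a..b} \<Longrightarrow> (f has_real_derivative f' x) (at x)"
  shows "integral {a..b} f' = f b - f a"
  using assms
  by (intro integral_unique fundamental_theorem_of_calculus)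
     (auto simp: has_real_derivative_iff_has_vector_derivative[symmetric] intro: has_field_derivative_at_within)

lemma integral_cbox_pdx:
  fixes f g :: "real \<times> real \<Rightarrow> real"
  assumes "x0 \<le> x1" "z0 \<le> z1"
    and "continuous_on (cbox (x0, z0) (x1, z1)) f" "continuous_on (cbox (x0, z0) (x1, z1)) g"
    and "\<And>x z. x \<in> {x0..x1} \<Longrightarrow> z \<in> {z0..z1} \<Longrightarrow> ((\<lambda>s. f (s, z)) has_real_derivative g (x, z)) (at x)"
  shows "integral (cbox (x0, z0) (x1, z1)) g
    = integral {z0..z1} (\<lambda>z. f (x1, z)) - integral {z0..z1} (\<lambda>z. f (x0, z))"
proof -
  have "integral (cbox (x0, z0) (x1, z1)) g = integral {z0..z1} (\<lambda>z. integral {x0..x1} (\<lambda>x. g (x, z)))"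
    using integral_swap_continuous[of x0 z0 x1 z1 "\<lambda>x z. g (x, z)"] integral_prod_continuous[OF assms(4)] assms(4)
    by (simp add: cbox_interval)
  also have "\<dots> = integral {z0..z1} (\<lambda>z. f (x1, z) - f (x0, z))"
    using assms(1,5) by (intro integral_cong integral_real_derivative) auto
  also have "\<dots> = integral {z0..z1} (\<lambda>z. f (x1, z)) - integral {z0..z1} (\<lambda>z. f (x0, z))"
    using assms(1,2) by (intro integral_diff integrable_continuous_interval
        continuous_on_compose2[OF assms(3)] continuous_intros) (auto simp: cbox_Pair_iff)
  finally show ?thesis .
qed

lemma integral_cbox_pdz:
  fixes f g :: "real \<times> real \<Rightarrow> real"
  assumes "x0 \<le> x1" "z0 \<le> z1"
    and "continuous_on (cbox (x0, z0) (x1, z1)) f" "continuous_on (cbox (x0, z0) (x1, z1)) g"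
    and "\<And>x z. x \<in> {x0..x1} \<Longrightarrow> z \<in> {z0..z1} \<Longrightarrow> ((\<lambda>s. f (x, s)) has_real_derivative g (x, z)) (at z)"
  shows "integral (cbox (x0, z0) (x1, z1)) g
    = integral {x0..x1} (\<lambda>x. f (x, z1)) - integral {x0..x1} (\<lambda>x. f (x, z0))"
proof -
  have "integral (cbox (x0, z0) (x1, z1)) g = integral {x0..x1} (\<lambda>x. integral {z0..z1} (\<lambda>z. g (x, z)))"
    using integral_prod_continuous[OF assms(4)] by (simp add: cbox_interval)
  also have "\<dots> = integral {x0..x1} (\<lambda>x. f (x, z1) - f (x, z0))"
    using assms(2,5) by (intro integral_cong integral_real_derivative) auto
  also have "\<dots> = integral {x0..x1} (\<lambda>x. f (x, z1)) - integral {x0..x1} (\<lambda>x. f (x, z0))"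
    using assms(1,2) by (intro integral_diff integrable_continuous_interval
        continuous_on_compose2[OF assms(3)] continuous_intros) (auto simp: cbox_Pair_iff)
  finally show ?thesis .
qed

lemma has_real_derivative_pdx:
  assumes "f differentiable (at (x, z))"
  shows "((\<lambda>s. f (s, z)) has_real_derivative pdx f (x, z)) (at x)"
proof -
  have "(f \<circ> (\<lambda>s. (s, z))) differentiable (at x)"
    using assms by (intro differentiable_chain_at) (auto intro!: derivative_intros)
  then show ?thesis
    unfolding pdx_def using DERIV_deriv_iff_real_differentiable by (simp add: o_def)
qed

lemma has_real_derivative_pdz:
  assumes "f differentiable (at (x, z))"
  shows "((\<lambda>s. f (x, s)) has_real_derivative pdz f (x, z)) (at z)"
proof -
  have "(f \<circ> (\<lambda>s. (x, s))) differentiable (at z)"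
    using assms by (intro differentiable_chain_at) (auto intro!: derivative_intros)
  then show ?thesis
    unfolding pdz_def using DERIV_deriv_iff_real_differentiable by (simp add: o_def)
qed

lemma cell_eq_cbox: "cell xs zs i j = cbox (xs i, zs j) (xs (Suc i), zs (Suc j))"
  by (simp add: cell_def cbox_Pair_eq)

lemma has_real_derivative_integral_cell:
  assumes "finite_rank_near t (cell xs zs i j) h"
    and "\<And>y. y \<in> cell xs zs i j \<Longrightarrow> ((\<lambda>s. h s y) has_real_derivative h' y) (at t)"
  shows "((\<lambda>s. integral (cell xs zs i j) (h s)) has_real_derivative integral (cell xs zs i j) h') (at t)"
  using has_real_derivative_integral_finite_rank assms unfolding cell_eq_cbox by blast

lemma has_real_derivative_integral_interval:
  fixes a b :: real
  assumes "finite_rank_near t {a..b} h" "\<And>y. y \<in> {a..b} \<Longrightarrow> ((\<lambda>s. h s y) has_real_derivative h' y) (at t)"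
  shows "((\<lambda>s. integral {a..b} (h s)) has_real_derivative integral {a..b} h') (at t)"
  using has_real_derivative_integral_finite_rank[of t a b h h'] assms by (simp add: cbox_interval)

definition edges_continuous :: "(nat \<Rightarrow> real) \<Rightarrow> (nat \<Rightarrow> real) \<Rightarrow> nat \<Rightarrow> nat \<Rightarrow>
    (real \<Rightarrow> real) \<Rightarrow> (real \<Rightarrow> real) \<Rightarrow> (real \<Rightarrow> real) \<Rightarrow> (real \<Rightarrow> real) \<Rightarrow> bool" where
  "edges_continuous xs zs i j gR gL gT gB \<longleftrightarrow>
     continuous_on {zs j..zs (Suc j)} gR \<and> continuous_on {zs j..zs (Suc j)} gL \<and>
     continuous_on {xs i..xs (Suc i)} gT \<and> continuous_on {xs i..xs (Suc i)} gB"

lemma bdry_cong: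
  assumes "\<And>z. z \<in> {zs j..zs (Suc j)} \<Longrightarrow> gR z = gR' z" "\<And>z. z \<in> {zs j..zs (Suc j)} \<Longrightarrow> gL z = gL' z"
    "\<And>x. x \<in> {xs i..xs (Suc i)} \<Longrightarrow> gT x = gT' x" "\<And>x. x \<in> {xs i..xs (Suc i)} \<Longrightarrow> gB x = gB' x"
  shows "bdry xs zs i j gR gL gT gB = bdry xs zs i j gR' gL' gT' gB'"
proof -
  have "integral {zs j..zs (Suc j)} gR = integral {zs j..zs (Suc j)} gR'"
    "integral {zs j..zs (Suc j)} gL = integral {zs j..zs (Suc j)} gL'"
    "integral {xs i..xs (Suc i)} gT = integral {xs i..xs (Suc i)} gT'"
    "integral {xs i..xs (Suc i)} gB = integral {xs i..xs (Suc i)} gB'"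
    using assms by (auto intro!: integral_cong)
  then show ?thesis
    unfolding bdry_def by simp
qed

lemma bdry_sum:
  assumes "finite I" "\<And>m. m \<in> I \<Longrightarrow> edges_continuous xs zs i j (gR m) (gL m) (gT m) (gB m)"
  shows "(\<Sum>m\<in>I. bdry xs zs i j (gR m) (gL m) (gT m) (gB m)) =
     bdry xs zs i j (\<lambda>z. \<Sum>m\<in>I. gR m z) (\<lambda>z. \<Sum>m\<in>I. gL m z) (\<lambda>x. \<Sum>m\<in>I. gT m x) (\<lambda>x. \<Sum>m\<in>I. gB m x)"
proof -
  have "integral {a..b} (\<lambda>x. \<Sum>m\<in>I. f m x) = (\<Sum>m\<in>I. integral {a..b} (f m))"
    if "\<And>m. m \<in> I \<Longrightarrow> continuous_on {a..b} (f m)" for f :: "'a \<Rightarrow> real \<Rightarrow> real" and a b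
    using that by (intro integral_sum[OF assms(1)] integrable_continuous_interval)
  with assms(2) show ?thesis
    unfolding bdry_def edges_continuous_def by (simp add: sum.distrib sum_subtractf)
qed

lemma bdry_add_diff:
  assumes "edges_continuous xs zs i j fR fL fT fB" "edges_continuous xs zs i j gR gL gT gB"
    "edges_continuous xs zs i j hR hL hT hB"
  shows "bdry xs zs i j fR fL fT fB + bdry xs zs i j gR gL gT gB - bdry xs zs i j hR hL hT hB =
    bdry xs zs i j (\<lambda>z. fR z + gR z - hR z) (\<lambda>z. fL z + gL z - hL z)
      (\<lambda>x. fT x + gT x - hT x) (\<lambda>x. fB x + gB x - hB x)"
proof -
  have "integral {a..b} (\<lambda>x. f x + g x - h x) = integral {a..b} f + integral {a..b} g - integral {a..b} h"
    if "continuous_on {a..b} f" "continuous_on {a..b} g" "continuous_on {a..b} h" for f g h :: "real \<Rightarrow> real" and a b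
    using that by (simp add: integral_add integral_diff integrable_add integrable_continuous_interval)
  with assms show ?thesis
    unfolding bdry_def edges_continuous_def by simp
qed

section \<open>Energy conservation of the scheme\<close>

definition eq2_rest :: "nat \<Rightarrow> nat \<Rightarrow> nat \<Rightarrow> (nat \<Rightarrow> real) \<Rightarrow> (nat \<Rightarrow> real) \<Rightarrow>
    (nat \<Rightarrow> nat \<Rightarrow> nat \<Rightarrow> nat \<Rightarrow> real \<times> real \<Rightarrow> real) \<Rightarrow>
    (nat \<Rightarrow> nat \<Rightarrow> nat \<Rightarrow> real \<times> real \<Rightarrow> real) \<Rightarrow>
    nat \<Rightarrow> nat \<Rightarrow> (nat \<Rightarrow> nat \<Rightarrow> nat \<Rightarrow> nat \<Rightarrow> real \<times> real \<Rightarrow> real) \<Rightarrow> real" where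
  "eq2_rest Nx Nz M xs zs A v i j w =
    (let vR = (\<lambda>l y. if Suc i < Nx then v (Suc i) j l y else 0);
         vL = (\<lambda>l y. if 0 < i then v i j l y else 0);
         vT = (\<lambda>l y. if Suc j < Nz then v i (Suc j) l y else 0);
         vB = (\<lambda>l y. if 0 < j then v i j l y else 0) in
     integral (cell xs zs i j) (\<lambda>y. \<Sum>m<M. (\<Sum>l<M. A i j m l y * v i j l y)
            * (pdx (w i j m 0) y + pdz (w i j m 1) y))
     + integral (cell xs zs i j) (\<lambda>y. \<Sum>m<M. \<Sum>d<2.
            (\<Sum>l<M. v i j l y * pd d (A i j m l) y) * w i j m d y)
     - (\<Sum>m<M. bdry xs zs i j
          (\<lambda>z. (\<Sum>l<M. A i j m l (xs (Suc i), z) * vR l (xs (Suc i), z)) * w i j m 0 (xs (Suc i), z))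
          (\<lambda>z. (\<Sum>l<M. A i j m l (xs i, z) * vL l (xs i, z)) * w i j m 0 (xs i, z))
          (\<lambda>x. (\<Sum>l<M. A i j m l (x, zs (Suc j)) * vT l (x, zs (Suc j))) * w i j m 1 (x, zs (Suc j)))
          (\<lambda>x. (\<Sum>l<M. A i j m l (x, zs j) * vB l (x, zs j)) * w i j m 1 (x, zs j))))"

lemma eq2_iff_eq2_rest:
  "eq2 Nx Nz M xs zs A v S i j w \<longleftrightarrow>
   integral (cell xs zs i j) (\<lambda>y. \<Sum>m<M. \<Sum>d<2. S i j m d y * w i j m d y)
     + eq2_rest Nx Nz M xs zs A v i j w = 0"
  unfolding eq2_def eq2_rest_def Let_def by (simp only: add_diff_eq add.assoc)

definition local_test :: "nat \<Rightarrow> nat \<Rightarrow> nat \<Rightarrow> nat \<Rightarrow> (real \<times> real \<Rightarrow> real) \<Rightarrow>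
    nat \<Rightarrow> nat \<Rightarrow> nat \<Rightarrow> nat \<Rightarrow> real \<times> real \<Rightarrow> real" where
  "local_test i j m d f i' j' m' d' y = (if (i', j', m', d') = (i, j, m, d) then f y else 0)"

lemma Vh2_local_test:
  assumes "poly2 k f"
  shows "Vh2 Nx Nz M k (local_test i j m d f)"
proof -
  have "local_test i j m d f i' j' m' d' = (if (i', j', m', d') = (i, j, m, d) then f else (\<lambda>_. 0))"
    for i' j' m' d'
    unfolding local_test_def by auto
  then show ?thesis
    unfolding Vh2_def using assms poly2_zero by simp
qed

lemma inner_local_test:
  assumes "m < M" "d < 2"
  shows "(\<Sum>m'<M. \<Sum>d'<2. S i j m' d' y * local_test i j m d f i j m' d' y) = S i j m d y * f y"
proof -
  have "(\<Sum>d'<2. S i j m' d' y * local_test i j m d f i j m' d' y) = (if m' = m then S i j m d y * f y else 0)"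
    for m'
    using assms(2) by (cases "m' = m") (auto simp: local_test_def numeral_2_eq_2 less_Suc_eq)
  then show ?thesis
    using assms(1) by simp
qed

locale ldg_solution =
  fixes Nx Nz M k :: nat
    and xs zs :: "nat \<Rightarrow> real"
    and A :: "nat \<Rightarrow> nat \<Rightarrow> nat \<Rightarrow> nat \<Rightarrow> real \<times> real \<Rightarrow> real"
    and v v' v'' :: "real \<Rightarrow> nat \<Rightarrow> nat \<Rightarrow> nat \<Rightarrow> real \<times> real \<Rightarrow> real"
    and S :: "real \<Rightarrow> nat \<Rightarrow> nat \<Rightarrow> nat \<Rightarrow> nat \<Rightarrow> real \<times> real \<Rightarrow> real"
    and t :: real
  assumes mesh: "0 < Nx" "0 < Nz" "\<forall>i<Nx. xs i < xs (Suc i)" "\<forall>j<Nz. zs j < zs (Suc j)"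
    and A_C1: "\<forall>i<Nx. \<forall>j<Nz. \<forall>m<M. \<forall>l<M. \<exists>U. open U \<and> cell xs zs i j \<subseteq> U \<and>
                 (\<forall>y\<in>U. A i j m l differentiable (at y)) \<and>
                 continuous_on U (pdx (A i j m l)) \<and> continuous_on U (pdz (A i j m l))"
    and A_sym: "\<forall>i<Nx. \<forall>j<Nz. \<forall>y\<in>cell xs zs i j. \<forall>m<M. \<forall>l<M. A i j m l y = A i j l m y"
    and v_Vh: "\<forall>t>0. Vh Nx Nz M k (v t) \<and> Vh Nx Nz M k (v' t) \<and> Vh Nx Nz M k (v'' t)"
    and S_Vh: "\<forall>t>0. Vh2 Nx Nz M k (S t)"
    and v_deriv: "\<forall>t>0. \<forall>i<Nx. \<forall>j<Nz. \<forall>m<M. \<forall>y.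
                 ((\<lambda>s. v s i j m y) has_real_derivative v' t i j m y) (at t)"
    and v'_deriv: "\<forall>t>0. \<forall>i<Nx. \<forall>j<Nz. \<forall>m<M. \<forall>y.
                 ((\<lambda>s. v' s i j m y) has_real_derivative v'' t i j m y) (at t)"
    and scheme1: "\<forall>t>0. \<forall>i<Nx. \<forall>j<Nz. \<forall>p. Vh Nx Nz M k p \<longrightarrow>
                 eq1 Nx Nz M xs zs A (v'' t) (S t) i j p"
    and scheme2: "\<forall>t>0. \<forall>i<Nx. \<forall>j<Nz. \<forall>w. Vh2 Nx Nz M k w \<longrightarrow>
                 eq2 Nx Nz M xs zs A (v t) (S t) i j w"
    and t_pos: "0 < t"
begin

lemma eventually_pos: "\<forall>\<^sub>F s in nhds t. 0 < s"
  using eventually_nhds_in_open[of "{0<..}" t] t_pos by auto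

lemma poly2_v:
  assumes "0 < s" "i < Nx" "j < Nz" "l < M"
  shows "poly2 k (v s i j l)" "poly2 k (v' s i j l)" "poly2 k (v'' s i j l)"
  using v_Vh assms unfolding Vh_def by blast+

lemma poly2_S:
  assumes "0 < s" "i < Nx" "j < Nz" "m < M" "d < 2"
  shows "poly2 k (S s i j m d)"
  using S_Vh assms unfolding Vh2_def by blast

lemma mesh_le:
  shows "i < Nx \<Longrightarrow> xs i \<le> xs (Suc i)" and "j < Nz \<Longrightarrow> zs j \<le> zs (Suc j)"
  using mesh by (auto intro: less_imp_le)

lemma A_on_cell:
  assumes "i < Nx" "j < Nz" "m < M" "l < M"
  shows "continuous_on (cell xs zs i j) (A i j m l)"
    and "continuous_on (cell xs zs i j) (pdx (A i j m l))"
    and "continuous_on (cell xs zs i j) (pdz (A i j m l))"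
    and "(x, z) \<in> cell xs zs i j \<Longrightarrow> ((\<lambda>s. A i j m l (s, z)) has_real_derivative pdx (A i j m l) (x, z)) (at x)"
    and "(x, z) \<in> cell xs zs i j \<Longrightarrow> ((\<lambda>s. A i j m l (x, s)) has_real_derivative pdz (A i j m l) (x, z)) (at z)"
proof -
  have "\<exists>U. open U \<and> cell xs zs i j \<subseteq> U \<and> (\<forall>y\<in>U. A i j m l differentiable (at y)) \<and>
      continuous_on U (pdx (A i j m l)) \<and> continuous_on U (pdz (A i j m l))"
    using A_C1 assms by simp
  then obtain U where U: "open U" "cell xs zs i j \<subseteq> U" "\<forall>y\<in>U. A i j m l differentiable (at y)"
    "continuous_on U (pdx (A i j m l))" "continuous_on U (pdz (A i j m l))"
    by blast
  have "continuous_on U (A i j m l)"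
    using U(3) by (intro differentiable_imp_continuous_on differentiable_at_imp_differentiable_on) auto
  then show "continuous_on (cell xs zs i j) (A i j m l)"
    using U(2) continuous_on_subset by blast
  show "continuous_on (cell xs zs i j) (pdx (A i j m l))" "continuous_on (cell xs zs i j) (pdz (A i j m l))"
    using U(2,4,5) continuous_on_subset by blast+
  show "(x, z) \<in> cell xs zs i j \<Longrightarrow> ((\<lambda>s. A i j m l (s, z)) has_real_derivative pdx (A i j m l) (x, z)) (at x)"
    using U(2,3) has_real_derivative_pdx by (meson subsetD)
  show "(x, z) \<in> cell xs zs i j \<Longrightarrow> ((\<lambda>s. A i j m l (x, s)) has_real_derivative pdz (A i j m l) (x, z)) (at z)"
    using U(2,3) has_real_derivative_pdz by (meson subsetD)
qed

lemma continuous_on_A_compose: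
  assumes "i < Nx" "j < Nz" "m < M" "l < M" "continuous_on K \<phi>" "\<phi> ` K \<subseteq> cell xs zs i j"
  shows "continuous_on K (\<lambda>y. A i j m l (\<phi> y))"
    and "continuous_on K (\<lambda>y. pdx (A i j m l) (\<phi> y))"
    and "continuous_on K (\<lambda>y. pdz (A i j m l) (\<phi> y))"
    and "d < 2 \<Longrightarrow> continuous_on K (\<lambda>y. pd d (A i j m l) (\<phi> y))"
  using continuous_on_compose2[OF A_on_cell(1)[OF assms(1-4)] assms(5,6)]
    continuous_on_compose2[OF A_on_cell(2)[OF assms(1-4)] assms(5,6)]
    continuous_on_compose2[OF A_on_cell(3)[OF assms(1-4)] assms(5,6)]
  by (auto simp: pd_def)

lemma continuous_on_v'_compose:
  assumes "i < Nx" "j < Nz" "l < M" "continuous_on K \<phi>"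
  shows "continuous_on K (\<lambda>y. v' t i j l (\<phi> y))" "continuous_on K (\<lambda>y. v'' t i j l (\<phi> y))"
    "continuous_on K (\<lambda>y. pdx (v' t i j l) (\<phi> y))" "continuous_on K (\<lambda>y. pdz (v' t i j l) (\<phi> y))"
  using continuous_on_poly2_compose[OF poly2_v(2)[OF t_pos assms(1-3)] assms(4)]
    continuous_on_poly2_compose[OF poly2_v(3)[OF t_pos assms(1-3)] assms(4)] by blast+

lemma continuous_on_S_compose:
  assumes "i < Nx" "j < Nz" "m < M" "d < 2" "continuous_on K \<phi>"
  shows "continuous_on K (\<lambda>y. S t i j m d (\<phi> y))"
    "continuous_on K (\<lambda>y. pdx (S t i j m d) (\<phi> y))" "continuous_on K (\<lambda>y. pdz (S t i j m d) (\<phi> y))"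
  using continuous_on_poly2_compose[OF poly2_S[OF t_pos assms(1-4)] assms(5)] by blast+

lemma edges_subset_cell:
  assumes "i < Nx" "j < Nz"
  shows "(\<lambda>z. (xs (Suc i), z)) ` {zs j..zs (Suc j)} \<subseteq> cell xs zs i j"
    and "(\<lambda>z. (xs i, z)) ` {zs j..zs (Suc j)} \<subseteq> cell xs zs i j"
    and "(\<lambda>x. (x, zs (Suc j))) ` {xs i..xs (Suc i)} \<subseteq> cell xs zs i j"
    and "(\<lambda>x. (x, zs j)) ` {xs i..xs (Suc i)} \<subseteq> cell xs zs i j"
  using mesh_le assms by (auto simp: cell_def)

lemma left_edge_subset_left_cell:
  assumes "i < Nx"
  shows "(\<lambda>z. (xs i, z)) ` {zs j..zs (Suc j)} \<subseteq> cell xs zs (if 0 < i then i - 1 else i) j"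
  using mesh_le(1)[of "i - 1"] mesh_le(1)[OF assms] assms by (cases i) (auto simp: cell_def)

lemma bottom_edge_subset_lower_cell:
  assumes "j < Nz"
  shows "(\<lambda>x. (x, zs j)) ` {xs i..xs (Suc i)} \<subseteq> cell xs zs i (if 0 < j then j - 1 else j)"
  using mesh_le(2)[of "j - 1"] mesh_le(2)[OF assms] assms by (cases j) (auto simp: cell_def)

lemma DERIV_v:
  assumes "i < Nx" "j < Nz" "l < M"
  shows "((\<lambda>s. v s i j l y) has_real_derivative v' t i j l y) (at t)"
    and "((\<lambda>s. v' s i j l y) has_real_derivative v'' t i j l y) (at t)"
  using v_deriv v'_deriv t_pos assms by blast+

lemma finite_rank_near_v:
  assumes "i < Nx" "j < Nz" "l < M" "continuous_on K \<phi>"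
  shows "finite_rank_near t K (\<lambda>s y. v s i j l (\<phi> y))"
    and "finite_rank_near t K (\<lambda>s y. v' s i j l (\<phi> y))"
proof -
  have "\<forall>\<^sub>F s in nhds t. poly2 k (v s i j l)" "\<forall>\<^sub>F s in nhds t. poly2 k (v' s i j l)"
    using eventually_pos by (auto elim!: eventually_mono intro: poly2_v assms)
  moreover have "(\<lambda>s. v s i j l y) differentiable (at t)" "(\<lambda>s. v' s i j l y) differentiable (at t)" for y
    using DERIV_v[OF assms(1-3)] unfolding real_differentiable_def by blast+
  ultimately have "finite_rank_near t UNIV (\<lambda>s. v s i j l)" "finite_rank_near t UNIV (\<lambda>s. v' s i j l)"
    by (auto intro: finite_rank_near_poly2)
  then show "finite_rank_near t K (\<lambda>s y. v s i j l (\<phi> y))" "finite_rank_near t K (\<lambda>s y. v' s i j l (\<phi> y))"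
    using finite_rank_near_compose[OF _ assms(4)] by blast+
qed

lemma eq2_rest_has_derivative:
  assumes ij: "i < Nx" "j < Nz" and w: "Vh2 Nx Nz M k w"
  shows "((\<lambda>s. eq2_rest Nx Nz M xs zs A (v s) i j w) has_real_derivative
      eq2_rest Nx Nz M xs zs A (v' t) i j w) (at t)"
proof -
  have pw: "\<And>m d. m < M \<Longrightarrow> d < 2 \<Longrightarrow> poly2 k (w i j m d)"
    using w ij unfolding Vh2_def by blast
  note cw = continuous_on_poly2_compose[OF pw]
  note edges = edges_subset_cell[OF ij] continuous_on_id
  show ?thesis
    unfolding eq2_rest_def Let_def bdry_def
    apply (intro DERIV_diff DERIV_add DERIV_sum has_real_derivative_integral_cell has_real_derivative_integral_interval)
    using ij
    apply (auto intro!: derivative_eq_intros DERIV_v DERIV_if_const sum.cong simp: mult_ac)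
    apply (auto intro!: finite_rank_near_sum finite_rank_near_mult finite_rank_near_add finite_rank_near_if
        finite_rank_near_const finite_rank_near_v continuous_on_A_compose cw edges continuous_intros)
    done
qed

text \<open>By the second equation, the moments of \<open>S s\<close> against monomials on a cell are
linear functionals of \<open>v s\<close>, hence differentiable at \<open>t\<close>.\<close>

lemma finite_rank_near_S:
  assumes "i < Nx" "j < Nz" "m < M" "d < 2" "continuous_on K \<phi>"
  shows "finite_rank_near t K (\<lambda>s y. S s i j m d (\<phi> y))"
proof -
  let ?K = "cell xs zs i j"
  have moment: "\<forall>\<^sub>F s in nhds t. integral ?K (\<lambda>y. monomial2 p y * S s i j m d y)
      = - eq2_rest Nx Nz M xs zs A (v s) i j (local_test i j m d (monomial2 p))"
    if "p \<in> mono_exps k" for p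
    using eventually_pos
  proof eventually_elim
    case (elim s)
    then have "eq2 Nx Nz M xs zs A (v s) (S s) i j (local_test i j m d (monomial2 p))"
      using scheme2 assms(1,2) Vh2_local_test[OF poly2_monomial2[OF that]] by blast
    then show ?case
      unfolding eq2_iff_eq2_rest inner_local_test[OF assms(3,4)] by (simp add: mult.commute)
  qed
  have "finite_rank_near t UNIV (\<lambda>s. S s i j m d)"
  proof (rule finite_rank_near_poly2_moments[where k=k])
    show "\<forall>\<^sub>F s in nhds t. poly2 k (S s i j m d)"
      using eventually_pos by (auto elim!: eventually_mono intro: poly2_S assms)
    show "xs i < xs (Suc i)" "zs j < zs (Suc j)"
      using mesh assms by auto
    fix p assume "p \<in> mono_exps k"
    have "((\<lambda>s. - eq2_rest Nx Nz M xs zs A (v s) i j (local_test i j m d (monomial2 p))) has_real_derivative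
        - eq2_rest Nx Nz M xs zs A (v' t) i j (local_test i j m d (monomial2 p))) (at t)"
      using eq2_rest_has_derivative[OF assms(1,2) Vh2_local_test[OF poly2_monomial2]] \<open>p \<in> mono_exps k\<close>
      by (intro DERIV_minus) blast
    then show "(\<lambda>s. integral (cbox (xs i, zs j) (xs (Suc i), zs (Suc j))) (\<lambda>y. monomial2 p y * S s i j m d y))
        differentiable (at t)"
      unfolding real_differentiable_def cell_eq_cbox[symmetric]
      using DERIV_cong_ev[OF refl moment[OF \<open>p \<in> mono_exps k\<close>] refl] by blast
  qed
  then show ?thesis
    using finite_rank_near_compose[OF _ assms(5)] by blast
qed

definition S_dot :: "nat \<Rightarrow> nat \<Rightarrow> nat \<Rightarrow> nat \<Rightarrow> real \<times> real \<Rightarrow> real" where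
  "S_dot i j m d y = (SOME D. ((\<lambda>s. S s i j m d y) has_real_derivative D) (at t))"

lemma DERIV_S:
  assumes "i < Nx" "j < Nz" "m < M" "d < 2"
  shows "((\<lambda>s. S s i j m d y) has_real_derivative S_dot i j m d y) (at t)"
  using finite_rank_near_differentiable[OF finite_rank_near_S[OF assms continuous_on_id] UNIV_I]
  unfolding S_dot_def real_differentiable_def by (rule someI_ex)

lemma continuous_on_S_dot:
  assumes "i < Nx" "j < Nz" "m < M" "d < 2" "continuous_on K \<phi>"
  shows "continuous_on K (\<lambda>y. S_dot i j m d (\<phi> y))"
proof -
  have "continuous_on UNIV (S_dot i j m d)"
    using finite_rank_near_derivative_continuous[OF finite_rank_near_S[OF assms(1-4) continuous_on_id]]
      DERIV_S[OF assms(1-4)] by blast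
  then show ?thesis
    using continuous_on_compose2[OF _ assms(5)] by blast
qed

lemma energy_has_derivative:
  "((\<lambda>s. energy Nx Nz M xs zs (v' s) (S s)) has_real_derivative
     (\<Sum>i<Nx. \<Sum>j<Nz. integral (cell xs zs i j) (\<lambda>y.
        (\<Sum>m<M. v'' t i j m y * v' t i j m y + v' t i j m y * v'' t i j m y)
      + (\<Sum>m<M. \<Sum>d<2. S_dot i j m d y * S t i j m d y + S t i j m d y * S_dot i j m d y)))) (at t)"
  unfolding energy_def
  apply (intro DERIV_sum has_real_derivative_integral_cell)
   apply (auto intro!: finite_rank_near_sum finite_rank_near_mult finite_rank_near_add finite_rank_near_S
      finite_rank_near_v continuous_on_id)[1]
  apply (auto intro!: derivative_eq_intros DERIV_S DERIV_v)
  done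

lemma S_dot_inner_S:
  assumes ij: "i < Nx" "j < Nz"
  shows "integral (cell xs zs i j) (\<lambda>y. \<Sum>m<M. \<Sum>d<2. S_dot i j m d y * S t i j m d y)
       = - eq2_rest Nx Nz M xs zs A (v' t) i j (S t)"
proof -
  have St: "Vh2 Nx Nz M k (S t)"
    using S_Vh t_pos by blast
  have ev: "\<forall>\<^sub>F s in nhds t. - eq2_rest Nx Nz M xs zs A (v s) i j (S t)
      = integral (cell xs zs i j) (\<lambda>y. \<Sum>m<M. \<Sum>d<2. S s i j m d y * S t i j m d y)"
    using eventually_pos
  proof eventually_elim
    case (elim s)
    then have "eq2 Nx Nz M xs zs A (v s) (S s) i j (S t)"
      using scheme2 ij St by blast
    then show ?case
      unfolding eq2_iff_eq2_rest by simp
  qed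
  have "((\<lambda>s. integral (cell xs zs i j) (\<lambda>y. \<Sum>m<M. \<Sum>d<2. S s i j m d y * S t i j m d y))
      has_real_derivative integral (cell xs zs i j) (\<lambda>y. \<Sum>m<M. \<Sum>d<2. S_dot i j m d y * S t i j m d y)) (at t)"
    using ij poly2_S[OF t_pos ij]
    by (intro has_real_derivative_integral_cell)
      (auto intro!: finite_rank_near_sum finite_rank_near_mult finite_rank_near_const finite_rank_near_S
        continuous_on_id continuous_on_poly2 derivative_eq_intros DERIV_S)
  then have "((\<lambda>s. - eq2_rest Nx Nz M xs zs A (v s) i j (S t)) has_real_derivative
      integral (cell xs zs i j) (\<lambda>y. \<Sum>m<M. \<Sum>d<2. S_dot i j m d y * S t i j m d y)) (at t)"
    by (rule iffD2[OF DERIV_cong_ev[OF refl ev refl]])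
  moreover have "((\<lambda>s. - eq2_rest Nx Nz M xs zs A (v s) i j (S t)) has_real_derivative
      - eq2_rest Nx Nz M xs zs A (v' t) i j (S t)) (at t)"
    using eq2_rest_has_derivative[OF ij St] by (rule DERIV_minus)
  ultimately show ?thesis
    by (rule DERIV_unique)
qed

lemma AS_inner_symmetric:
  assumes "i < Nx" "j < Nz" "y \<in> cell xs zs i j"
  shows "(\<Sum>m<M. AS M A (S t) i j m d y * u m) = (\<Sum>m<M. (\<Sum>l<M. A i j m l y * u l) * S t i j m d y)"
  unfolding AS_def using A_sym assms by (intro sum_symmetric_bilinear) blast

definition flux :: "nat \<Rightarrow> nat \<Rightarrow> nat \<Rightarrow> real \<times> real \<Rightarrow> real" where
  "flux i j d y = (\<Sum>m<M. (\<Sum>l<M. A i j m l y * v' t i j l y) * S t i j m d y)"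

definition flux_dx :: "nat \<Rightarrow> nat \<Rightarrow> real \<times> real \<Rightarrow> real" where
  "flux_dx i j y = (\<Sum>m<M.
      (\<Sum>l<M. pdx (A i j m l) y * v' t i j l y + A i j m l y * pdx (v' t i j l) y) * S t i j m 0 y
    + (\<Sum>l<M. A i j m l y * v' t i j l y) * pdx (S t i j m 0) y)"

definition flux_dz :: "nat \<Rightarrow> nat \<Rightarrow> real \<times> real \<Rightarrow> real" where
  "flux_dz i j y = (\<Sum>m<M.
      (\<Sum>l<M. pdz (A i j m l) y * v' t i j l y + A i j m l y * pdz (v' t i j l) y) * S t i j m 1 y
    + (\<Sum>l<M. A i j m l y * v' t i j l y) * pdz (S t i j m 1) y)"

lemma flux_has_pdx:
  assumes "i < Nx" "j < Nz" "(x, z) \<in> cell xs zs i j"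
  shows "((\<lambda>s. flux i j 0 (s, z)) has_real_derivative flux_dx i j (x, z)) (at x)"
  unfolding flux_def flux_dx_def using assms
  by (auto intro!: derivative_eq_intros A_on_cell(4) poly2_pdx(1)[OF poly2_v(2)[OF t_pos]]
      poly2_pdx(1)[OF poly2_S[OF t_pos]] simp: algebra_simps)

lemma flux_has_pdz:
  assumes "i < Nx" "j < Nz" "(x, z) \<in> cell xs zs i j"
  shows "((\<lambda>s. flux i j 1 (x, s)) has_real_derivative flux_dz i j (x, z)) (at z)"
  unfolding flux_def flux_dz_def using assms
  by (auto intro!: derivative_eq_intros A_on_cell(5) poly2_pdz(1)[OF poly2_v(2)[OF t_pos]]
      poly2_pdz(1)[OF poly2_S[OF t_pos]] simp: algebra_simps)

lemma continuous_on_flux_compose: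
  assumes "i < Nx" "j < Nz" "d < 2" "continuous_on K \<phi>" "\<phi> ` K \<subseteq> cell xs zs i j"
  shows "continuous_on K (\<lambda>y. flux i j d (\<phi> y))"
  unfolding flux_def using assms
  by (auto intro!: continuous_intros continuous_on_A_compose continuous_on_v'_compose continuous_on_S_compose)

lemma volume_integrand_eq_flux_derivatives:
  assumes "i < Nx" "j < Nz" "y \<in> cell xs zs i j"
  shows "(\<Sum>m<M. \<Sum>d<2. AS M A (S t) i j m d y * pd d (v' t i j m) y)
     + (\<Sum>m<M. (\<Sum>l<M. A i j m l y * v' t i j l y) * (pdx (S t i j m 0) y + pdz (S t i j m 1) y))
     + (\<Sum>m<M. \<Sum>d<2. (\<Sum>l<M. v' t i j l y * pd d (A i j m l) y) * S t i j m d y)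
     = flux_dx i j y + flux_dz i j y"
proof -
  have two: "(\<Sum>d<2. f d) = f 0 + f 1" for f :: "nat \<Rightarrow> real"
    by (simp add: numeral_2_eq_2)
  have "(\<Sum>m<M. \<Sum>d<2. AS M A (S t) i j m d y * pd d (v' t i j m) y)
      = (\<Sum>m<M. AS M A (S t) i j m 0 y * pdx (v' t i j m) y)
      + (\<Sum>m<M. AS M A (S t) i j m 1 y * pdz (v' t i j m) y)"
    by (simp add: two pd_def sum.distrib)
  also have "\<dots> = (\<Sum>m<M. (\<Sum>l<M. A i j m l y * pdx (v' t i j l) y) * S t i j m 0 y)
      + (\<Sum>m<M. (\<Sum>l<M. A i j m l y * pdz (v' t i j l) y) * S t i j m 1 y)"
    using assms by (simp add: AS_inner_symmetric)
  finally show ?thesis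
    unfolding flux_dx_def flux_dz_def
    by (simp add: two pd_def sum.distrib distrib_left distrib_right sum_distrib_left sum_distrib_right mult_ac)
qed

lemma volume_terms_eq_flux_bdry:
  assumes ij: "i < Nx" "j < Nz"
  shows "integral (cell xs zs i j) (\<lambda>y. \<Sum>m<M. \<Sum>d<2. AS M A (S t) i j m d y * pd d (v' t i j m) y)
    + integral (cell xs zs i j) (\<lambda>y. \<Sum>m<M. (\<Sum>l<M. A i j m l y * v' t i j l y)
            * (pdx (S t i j m 0) y + pdz (S t i j m 1) y))
    + integral (cell xs zs i j) (\<lambda>y. \<Sum>m<M. \<Sum>d<2.
            (\<Sum>l<M. v' t i j l y * pd d (A i j m l) y) * S t i j m d y)
    = bdry xs zs i j (\<lambda>z. flux i j 0 (xs (Suc i), z)) (\<lambda>z. flux i j 0 (xs i, z))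
        (\<lambda>x. flux i j 1 (x, zs (Suc j))) (\<lambda>x. flux i j 1 (x, zs j))"
  (is "integral ?K ?f1 + integral ?K ?f2 + integral ?K ?f3 = _")
proof -
  have two: "(\<Sum>d<2. f d) = f 0 + f 1" for f :: "nat \<Rightarrow> real"
    by (simp add: numeral_2_eq_2)
  note continuous = continuous_on_A_compose[OF ij _ _ continuous_on_id] continuous_on_v'_compose[OF ij _ continuous_on_id]
    continuous_on_S_compose[OF ij _ _ continuous_on_id]
  have integrable: "f integrable_on ?K" if "continuous_on ?K f" for f :: "real \<times> real \<Rightarrow> real"
    using that unfolding cell_eq_cbox by (rule integrable_continuous)
  have cont: "continuous_on ?K ?f1" "continuous_on ?K ?f2" "continuous_on ?K ?f3"
    "continuous_on ?K (flux_dx i j)" "continuous_on ?K (flux_dz i j)"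
    unfolding two pd_def AS_def flux_dx_def flux_dz_def using continuous by (auto intro!: continuous_intros)
  note integrable = cont[THEN integrable]
  have "continuous_on ?K (flux i j 0)" "continuous_on ?K (flux i j 1)"
    using continuous_on_flux_compose[OF ij _ continuous_on_id] by simp_all
  note cont = cont this
  have "integral ?K ?f1 + integral ?K ?f2 + integral ?K ?f3 = integral ?K (\<lambda>y. ?f1 y + ?f2 y + ?f3 y)"
    using integrable by (simp add: integral_add integrable_add)
  also have "\<dots> = integral ?K (\<lambda>y. flux_dx i j y + flux_dz i j y)"
    using volume_integrand_eq_flux_derivatives[OF ij] by (intro integral_cong) auto
  also have "\<dots> = integral ?K (flux_dx i j) + integral ?K (flux_dz i j)"
    using integrable by (simp add: integral_add)
  also have "integral ?K (flux_dx i j)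
      = integral {zs j..zs (Suc j)} (\<lambda>z. flux i j 0 (xs (Suc i), z)) - integral {zs j..zs (Suc j)} (\<lambda>z. flux i j 0 (xs i, z))"
    unfolding cell_eq_cbox
    by (rule integral_cbox_pdx) (use ij mesh_le cont(4,6) flux_has_pdx[OF ij] in \<open>auto simp: cell_eq_cbox\<close>)
  also have "integral ?K (flux_dz i j)
      = integral {xs i..xs (Suc i)} (\<lambda>x. flux i j 1 (x, zs (Suc j))) - integral {xs i..xs (Suc i)} (\<lambda>x. flux i j 1 (x, zs j))"
    unfolding cell_eq_cbox
    by (rule integral_cbox_pdz) (use ij mesh_le cont(5,7) flux_has_pdz[OF ij] in \<open>auto simp: cell_eq_cbox\<close>)
  finally show ?thesis
    unfolding bdry_def by simp
qed

text \<open>In the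
balance of cell \<open>(i, j)\<close> the flux \<open>flux_x i j\<close> appears with a plus sign and in that of cell
\<open>(i + 1, j)\<close> with a minus sign, so these terms telescope.\<close>

definition flux_x :: "nat \<Rightarrow> nat \<Rightarrow> real \<Rightarrow> real" where
  "flux_x i j z = (\<Sum>m<M. (\<Sum>l<M. A i j m l (xs (Suc i), z) *
     (if Suc i < Nx then v' t (Suc i) j l (xs (Suc i), z) else 0)) * S t i j m 0 (xs (Suc i), z))"

definition flux_z :: "nat \<Rightarrow> nat \<Rightarrow> real \<Rightarrow> real" where
  "flux_z i j x = (\<Sum>m<M. (\<Sum>l<M. A i j m l (x, zs (Suc j)) *
     (if Suc j < Nz then v' t i (Suc j) l (x, zs (Suc j)) else 0)) * S t i j m 1 (x, zs (Suc j)))"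

lemma continuous_on_flux_x:
  assumes "i < Nx" "j < Nz"
  shows "continuous_on {zs j..zs (Suc j)} (flux_x i j)"
  unfolding flux_x_def using assms edges_subset_cell[OF assms]
  by (auto intro!: continuous_intros continuous_on_if_const continuous_on_A_compose
      continuous_on_v'_compose continuous_on_S_compose)

lemma continuous_on_flux_z:
  assumes "i < Nx" "j < Nz"
  shows "continuous_on {xs i..xs (Suc i)} (flux_z i j)"
  unfolding flux_z_def using assms edges_subset_cell[OF assms]
  by (auto intro!: continuous_intros continuous_on_if_const continuous_on_A_compose
      continuous_on_v'_compose continuous_on_S_compose)

lemma right_flux_eq:
  assumes "i < Nx" "j < Nz" "z \<in> {zs j..zs (Suc j)}"
  shows "(\<Sum>m<M. AS M A (S t) i j m 0 (xs (Suc i), z) * v' t i j m (xs (Suc i), z)) = flux i j 0 (xs (Suc i), z)"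
proof -
  have "(xs (Suc i), z) \<in> cell xs zs i j"
    using edges_subset_cell(1)[OF assms(1,2)] assms(3) by blast
  then show ?thesis
    unfolding flux_def by (rule AS_inner_symmetric[OF assms(1,2)])
qed

lemma top_flux_eq:
  assumes "i < Nx" "j < Nz" "x \<in> {xs i..xs (Suc i)}"
  shows "(\<Sum>m<M. AS M A (S t) i j m 1 (x, zs (Suc j)) * v' t i j m (x, zs (Suc j))) = flux i j 1 (x, zs (Suc j))"
proof -
  have "(x, zs (Suc j)) \<in> cell xs zs i j"
    using edges_subset_cell(3)[OF assms(1,2)] assms(3) by blast
  then show ?thesis
    unfolding flux_def by (rule AS_inner_symmetric[OF assms(1,2)])
qed

lemma left_flux_eq:
  assumes "i < Nx" "j < Nz" "z \<in> {zs j..zs (Suc j)}"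
  shows "(\<Sum>m<M. AS M A (S t) (if 0 < i then i - 1 else i) j m 0 (xs i, z) * v' t i j m (xs i, z))
    = (if 0 < i then flux_x (i - 1) j z else flux i j 0 (xs i, z))"
proof (cases "0 < i")
  case True
  then have "(xs i, z) \<in> cell xs zs (i - 1) j" "i - 1 < Nx" "Suc (i - 1) = i"
    using left_edge_subset_left_cell[OF assms(1), of j] assms by (auto simp: image_subset_iff)
  with True assms show ?thesis
    unfolding flux_x_def by (simp add: AS_inner_symmetric)
next
  case False
  have "(xs i, z) \<in> cell xs zs i j"
    using edges_subset_cell(2)[OF assms(1,2)] assms(3) by (auto simp: image_subset_iff)
  with False assms show ?thesis
    unfolding flux_def by (simp add: AS_inner_symmetric)
qed

lemma bottom_flux_eq:
  assumes "i < Nx" "j < Nz" "x \<in> {xs i..xs (Suc i)}"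
  shows "(\<Sum>m<M. AS M A (S t) i (if 0 < j then j - 1 else j) m 1 (x, zs j) * v' t i j m (x, zs j))
    = (if 0 < j then flux_z i (j - 1) x else flux i j 1 (x, zs j))"
proof (cases "0 < j")
  case True
  then have "(x, zs j) \<in> cell xs zs i (j - 1)" "j - 1 < Nz" "Suc (j - 1) = j"
    using bottom_edge_subset_lower_cell[OF assms(2), of i] assms by (auto simp: image_subset_iff)
  with True assms show ?thesis
    unfolding flux_z_def by (simp add: AS_inner_symmetric)
next
  case False
  have "(x, zs j) \<in> cell xs zs i j"
    using edges_subset_cell(4)[OF assms(1,2)] assms(3) by (auto simp: image_subset_iff)
  with False assms show ?thesis
    unfolding flux_def by (simp add: AS_inner_symmetric)
qed

lemma eq1_tested_with_v':
  assumes ij: "i < Nx" "j < Nz"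
  shows "integral (cell xs zs i j) (\<lambda>y. \<Sum>m<M. v'' t i j m y * v' t i j m y)
    + integral (cell xs zs i j) (\<lambda>y. \<Sum>m<M. \<Sum>d<2. AS M A (S t) i j m d y * pd d (v' t i j m) y)
    = bdry xs zs i j (\<lambda>z. flux i j 0 (xs (Suc i), z))
        (\<lambda>z. if 0 < i then flux_x (i - 1) j z else flux i j 0 (xs i, z))
        (\<lambda>x. flux i j 1 (x, zs (Suc j)))
        (\<lambda>x. if 0 < j then flux_z i (j - 1) x else flux i j 1 (x, zs j))"
proof -
  define iL jB where "iL = (if 0 < i then i - 1 else i)" and "jB = (if 0 < j then j - 1 else j)"
  have "iL < Nx" "jB < Nz"
    using ij unfolding iL_def jB_def by auto
  note edges = edges_subset_cell[OF ij] left_edge_subset_left_cell[OF ij(1), folded iL_def]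
    bottom_edge_subset_lower_cell[OF ij(2), folded jB_def]
  have "(\<Sum>m<M. bdry xs zs i j
          (\<lambda>z. AS M A (S t) i j m 0 (xs (Suc i), z) * v' t i j m (xs (Suc i), z))
          (\<lambda>z. AS M A (S t) iL j m 0 (xs i, z) * v' t i j m (xs i, z))
          (\<lambda>x. AS M A (S t) i j m 1 (x, zs (Suc j)) * v' t i j m (x, zs (Suc j)))
          (\<lambda>x. AS M A (S t) i jB m 1 (x, zs j) * v' t i j m (x, zs j)))
      = bdry xs zs i j
          (\<lambda>z. \<Sum>m<M. AS M A (S t) i j m 0 (xs (Suc i), z) * v' t i j m (xs (Suc i), z))
          (\<lambda>z. \<Sum>m<M. AS M A (S t) iL j m 0 (xs i, z) * v' t i j m (xs i, z))
          (\<lambda>x. \<Sum>m<M. AS M A (S t) i j m 1 (x, zs (Suc j)) * v' t i j m (x, zs (Suc j)))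
          (\<lambda>x. \<Sum>m<M. AS M A (S t) i jB m 1 (x, zs j) * v' t i j m (x, zs j))"
    unfolding AS_def using ij \<open>iL < Nx\<close> \<open>jB < Nz\<close> edges
    by (intro bdry_sum) (auto simp: edges_continuous_def image_subset_iff intro!: continuous_intros continuous_on_A_compose
        continuous_on_v'_compose continuous_on_S_compose)
  also have "\<dots> = bdry xs zs i j (\<lambda>z. flux i j 0 (xs (Suc i), z))
        (\<lambda>z. if 0 < i then flux_x (i - 1) j z else flux i j 0 (xs i, z))
        (\<lambda>x. flux i j 1 (x, zs (Suc j)))
        (\<lambda>x. if 0 < j then flux_z i (j - 1) x else flux i j 1 (x, zs j))"
    unfolding iL_def jB_def by (rule bdry_cong)
      (simp_all only: right_flux_eq[OF ij] left_flux_eq[OF ij] top_flux_eq[OF ij] bottom_flux_eq[OF ij])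
  finally show ?thesis
    using scheme1 t_pos ij v_Vh unfolding eq1_def Let_def iL_def jB_def by simp
qed

lemma eq2_rest_at_S:
  assumes ij: "i < Nx" "j < Nz"
  shows "eq2_rest Nx Nz M xs zs A (v' t) i j (S t)
    = integral (cell xs zs i j) (\<lambda>y. \<Sum>m<M. (\<Sum>l<M. A i j m l y * v' t i j l y)
            * (pdx (S t i j m 0) y + pdz (S t i j m 1) y))
    + integral (cell xs zs i j) (\<lambda>y. \<Sum>m<M. \<Sum>d<2.
            (\<Sum>l<M. v' t i j l y * pd d (A i j m l) y) * S t i j m d y)
    - bdry xs zs i j (flux_x i j) (\<lambda>z. if 0 < i then flux i j 0 (xs i, z) else 0)
        (flux_z i j) (\<lambda>x. if 0 < j then flux i j 1 (x, zs j) else 0)"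
proof -
  define vR vL vT vB where
    "vR l y = (if Suc i < Nx then v' t (Suc i) j l y else 0)" and "vL l y = (if 0 < i then v' t i j l y else 0)"
    and "vT l y = (if Suc j < Nz then v' t i (Suc j) l y else 0)" and "vB l y = (if 0 < j then v' t i j l y else 0)"
    for l y
  have "(\<Sum>m<M. bdry xs zs i j
          (\<lambda>z. (\<Sum>l<M. A i j m l (xs (Suc i), z) * vR l (xs (Suc i), z)) * S t i j m 0 (xs (Suc i), z))
          (\<lambda>z. (\<Sum>l<M. A i j m l (xs i, z) * vL l (xs i, z)) * S t i j m 0 (xs i, z))
          (\<lambda>x. (\<Sum>l<M. A i j m l (x, zs (Suc j)) * vT l (x, zs (Suc j))) * S t i j m 1 (x, zs (Suc j)))
          (\<lambda>x. (\<Sum>l<M. A i j m l (x, zs j) * vB l (x, zs j)) * S t i j m 1 (x, zs j)))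
      = bdry xs zs i j
          (\<lambda>z. \<Sum>m<M. (\<Sum>l<M. A i j m l (xs (Suc i), z) * vR l (xs (Suc i), z)) * S t i j m 0 (xs (Suc i), z))
          (\<lambda>z. \<Sum>m<M. (\<Sum>l<M. A i j m l (xs i, z) * vL l (xs i, z)) * S t i j m 0 (xs i, z))
          (\<lambda>x. \<Sum>m<M. (\<Sum>l<M. A i j m l (x, zs (Suc j)) * vT l (x, zs (Suc j))) * S t i j m 1 (x, zs (Suc j)))
          (\<lambda>x. \<Sum>m<M. (\<Sum>l<M. A i j m l (x, zs j) * vB l (x, zs j)) * S t i j m 1 (x, zs j))"
    unfolding vR_def vL_def vT_def vB_def using ij edges_subset_cell[OF ij]
    by (intro bdry_sum) (auto simp: edges_continuous_def intro!: continuous_intros continuous_on_if_const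
        continuous_on_A_compose continuous_on_v'_compose continuous_on_S_compose)
  also have "\<dots> = bdry xs zs i j (flux_x i j) (\<lambda>z. if 0 < i then flux i j 0 (xs i, z) else 0)
        (flux_z i j) (\<lambda>x. if 0 < j then flux i j 1 (x, zs j) else 0)"
    unfolding vR_def vL_def vT_def vB_def flux_x_def flux_z_def flux_def by (rule bdry_cong) simp_all
  finally show ?thesis
    unfolding eq2_rest_def Let_def vR_def vL_def vT_def vB_def by simp
qed

lemma cell_energy_balance:
  assumes ij: "i < Nx" "j < Nz"
  shows "integral (cell xs zs i j) (\<lambda>y. \<Sum>m<M. v'' t i j m y * v' t i j m y)
    + integral (cell xs zs i j) (\<lambda>y. \<Sum>m<M. \<Sum>d<2. S_dot i j m d y * S t i j m d y)
    = bdry xs zs i j (flux_x i j) (\<lambda>z. if 0 < i then flux_x (i - 1) j z else 0)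
        (flux_z i j) (\<lambda>x. if 0 < j then flux_z i (j - 1) x else 0)"
proof -
  have edges: "(\<lambda>z. (xs (Suc i), z)) ` {zs j..zs (Suc j)} \<subseteq> cell xs zs i j"
    "(\<lambda>z. (xs i, z)) ` {zs j..zs (Suc j)} \<subseteq> cell xs zs i j"
    "(\<lambda>x. (x, zs (Suc j))) ` {xs i..xs (Suc i)} \<subseteq> cell xs zs i j"
    "(\<lambda>x. (x, zs j)) ` {xs i..xs (Suc i)} \<subseteq> cell xs zs i j"
    using edges_subset_cell[OF ij] .
  have flux_edges: "continuous_on {zs j..zs (Suc j)} (\<lambda>z. flux i j 0 (xs (Suc i), z))"
    "continuous_on {zs j..zs (Suc j)} (\<lambda>z. flux i j 0 (xs i, z))"
    "continuous_on {xs i..xs (Suc i)} (\<lambda>x. flux i j 1 (x, zs (Suc j)))"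
    "continuous_on {xs i..xs (Suc i)} (\<lambda>x. flux i j 1 (x, zs j))"
    using ij edges by (auto intro!: continuous_on_flux_compose continuous_intros)
  have "integral (cell xs zs i j) (\<lambda>y. \<Sum>m<M. v'' t i j m y * v' t i j m y)
    + integral (cell xs zs i j) (\<lambda>y. \<Sum>m<M. \<Sum>d<2. S_dot i j m d y * S t i j m d y)
    = bdry xs zs i j (\<lambda>z. flux i j 0 (xs (Suc i), z))
        (\<lambda>z. if 0 < i then flux_x (i - 1) j z else flux i j 0 (xs i, z))
        (\<lambda>x. flux i j 1 (x, zs (Suc j)))
        (\<lambda>x. if 0 < j then flux_z i (j - 1) x else flux i j 1 (x, zs j))
    + bdry xs zs i j (flux_x i j) (\<lambda>z. if 0 < i then flux i j 0 (xs i, z) else 0)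
        (flux_z i j) (\<lambda>x. if 0 < j then flux i j 1 (x, zs j) else 0)
    - bdry xs zs i j (\<lambda>z. flux i j 0 (xs (Suc i), z)) (\<lambda>z. flux i j 0 (xs i, z))
        (\<lambda>x. flux i j 1 (x, zs (Suc j))) (\<lambda>x. flux i j 1 (x, zs j))"
    using eq1_tested_with_v'[OF ij] S_dot_inner_S[OF ij] eq2_rest_at_S[OF ij] volume_terms_eq_flux_bdry[OF ij]
    by linarith
  also have "\<dots> = bdry xs zs i j (flux_x i j) (\<lambda>z. if 0 < i then flux_x (i - 1) j z else 0)
        (flux_z i j) (\<lambda>x. if 0 < j then flux_z i (j - 1) x else 0)"
    using ij flux_edges
    by (subst bdry_add_diff)
      (auto simp: edges_continuous_def intro!: bdry_cong continuous_on_if_const continuous_on_flux_x continuous_on_flux_z)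
  finally show ?thesis .
qed

lemma sum_cell_fluxes_eq_0:
  "(\<Sum>i<Nx. \<Sum>j<Nz. bdry xs zs i j (flux_x i j) (\<lambda>z. if 0 < i then flux_x (i - 1) j z else 0)
      (flux_z i j) (\<lambda>x. if 0 < j then flux_z i (j - 1) x else 0)) = 0"
proof -
  let ?X = "\<lambda>i j. integral {zs j..zs (Suc j)} (flux_x i j)" and ?Z = "\<lambda>i j. integral {xs i..xs (Suc i)} (flux_z i j)"
  have "bdry xs zs i j (flux_x i j) (\<lambda>z. if 0 < i then flux_x (i - 1) j z else 0)
      (flux_z i j) (\<lambda>x. if 0 < j then flux_z i (j - 1) x else 0)
    = (?X i j - (if 0 < i then ?X (i - 1) j else 0)) + (?Z i j - (if 0 < j then ?Z i (j - 1) else 0))" for i j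
    unfolding bdry_def by (cases "0 < i"; cases "0 < j") simp_all
  then have "(\<Sum>i<Nx. \<Sum>j<Nz. bdry xs zs i j (flux_x i j) (\<lambda>z. if 0 < i then flux_x (i - 1) j z else 0)
      (flux_z i j) (\<lambda>x. if 0 < j then flux_z i (j - 1) x else 0))
    = (\<Sum>j<Nz. \<Sum>i<Nx. ?X i j - (if 0 < i then ?X (i - 1) j else 0))
      + (\<Sum>i<Nx. \<Sum>j<Nz. ?Z i j - (if 0 < j then ?Z i (j - 1) else 0))"
    by (simp add: sum.distrib) (rule sum.swap)
  also have "\<dots> = (\<Sum>j<Nz. ?X (Nx - 1) j) + (\<Sum>i<Nx. ?Z i (Nz - 1))"
    using sum_minus_previous[of "\<lambda>i. ?X i _" Nx] sum_minus_previous[of "?Z _" Nz] mesh(1,2) by simp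
  also have "\<dots> = 0"
  proof -
    have "flux_x (Nx - 1) j = (\<lambda>_. 0)" "flux_z i (Nz - 1) = (\<lambda>_. 0)" for i j
      using mesh(1,2) by (simp_all add: flux_x_def flux_z_def fun_eq_iff)
    then show ?thesis
      by simp
  qed
  finally show ?thesis .
qed

lemma cell_energy_derivative:
  assumes ij: "i < Nx" "j < Nz"
  shows "integral (cell xs zs i j) (\<lambda>y.
        (\<Sum>m<M. v'' t i j m y * v' t i j m y + v' t i j m y * v'' t i j m y)
      + (\<Sum>m<M. \<Sum>d<2. S_dot i j m d y * S t i j m d y + S t i j m d y * S_dot i j m d y))
    = 2 * bdry xs zs i j (flux_x i j) (\<lambda>z. if 0 < i then flux_x (i - 1) j z else 0)
        (flux_z i j) (\<lambda>x. if 0 < j then flux_z i (j - 1) x else 0)"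
proof -
  let ?K = "cell xs zs i j"
  let ?f = "\<lambda>y. \<Sum>m<M. v'' t i j m y * v' t i j m y"
    and ?g = "\<lambda>y. \<Sum>m<M. \<Sum>d<2. S_dot i j m d y * S t i j m d y"
  have twice: "a * b + b * a = 2 * (a * b)" for a b :: real
    by (simp add: mult.commute mult_2)
  have "continuous_on ?K ?f" "continuous_on ?K ?g"
    using ij by (auto intro!: continuous_intros continuous_on_v'_compose continuous_on_S_compose
        continuous_on_S_dot continuous_on_id)
  then have "?f integrable_on ?K" "?g integrable_on ?K"
    unfolding cell_eq_cbox by (auto intro: integrable_continuous)
  moreover have "(\<Sum>m<M. v'' t i j m y * v' t i j m y + v' t i j m y * v'' t i j m y)
      + (\<Sum>m<M. \<Sum>d<2. S_dot i j m d y * S t i j m d y + S t i j m d y * S_dot i j m d y)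
    = 2 * (?f y + ?g y)" for y
    by (simp add: twice distrib_left flip: sum_distrib_left)
  ultimately show ?thesis
    using cell_energy_balance[OF ij] by (simp add: integral_add)
qed

theorem energy_has_derivative_0:
  "((\<lambda>s. energy Nx Nz M xs zs (v' s) (S s)) has_real_derivative 0) (at t)"
proof -
  have "(\<Sum>i<Nx. \<Sum>j<Nz. integral (cell xs zs i j) (\<lambda>y.
        (\<Sum>m<M. v'' t i j m y * v' t i j m y + v' t i j m y * v'' t i j m y)
      + (\<Sum>m<M. \<Sum>d<2. S_dot i j m d y * S t i j m d y + S t i j m d y * S_dot i j m d y))) = 0"
    using cell_energy_derivative sum_cell_fluxes_eq_0 by (simp add: sum_distrib_left[symmetric])
  with energy_has_derivative show ?thesis
    by simp
qed

end

theorem theorem2: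
  fixes Nx Nz M k :: nat
    and xs zs :: "nat \<Rightarrow> real"
    and A :: "nat \<Rightarrow> nat \<Rightarrow> nat \<Rightarrow> nat \<Rightarrow> real \<times> real \<Rightarrow> real"
    and v v' v'' :: "real \<Rightarrow> nat \<Rightarrow> nat \<Rightarrow> nat \<Rightarrow> real \<times> real \<Rightarrow> real"
    and S :: "real \<Rightarrow> nat \<Rightarrow> nat \<Rightarrow> nat \<Rightarrow> nat \<Rightarrow> real \<times> real \<Rightarrow> real"
  assumes mesh: "0 < Nx" "0 < Nz" "\<forall>i<Nx. xs i < xs (Suc i)" "\<forall>j<Nz. zs j < zs (Suc j)"
    and A_C1: "\<forall>i<Nx. \<forall>j<Nz. \<forall>m<M. \<forall>l<M. \<exists>U. open U \<and> cell xs zs i j \<subseteq> U \<and>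
                 (\<forall>y\<in>U. A i j m l differentiable (at y)) \<and>
                 continuous_on U (pdx (A i j m l)) \<and> continuous_on U (pdz (A i j m l))"
    and A_sym: "\<forall>i<Nx. \<forall>j<Nz. \<forall>y\<in>cell xs zs i j. \<forall>m<M. \<forall>l<M. A i j m l y = A i j l m y"
    and A_pd: "\<forall>i<Nx. \<forall>j<Nz. \<forall>y\<in>cell xs zs i j. \<forall>\<xi> :: nat \<Rightarrow> real. (\<exists>m<M. \<xi> m \<noteq> 0) \<longrightarrow>
                 0 < (\<Sum>m<M. \<Sum>l<M. \<xi> m * A i j m l y * \<xi> l)"
    and v_Vh: "\<forall>t>0. Vh Nx Nz M k (v t) \<and> Vh Nx Nz M k (v' t) \<and> Vh Nx Nz M k (v'' t)"
    and S_Vh: "\<forall>t>0. Vh2 Nx Nz M k (S t)"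
    and v_deriv: "\<forall>t>0. \<forall>i<Nx. \<forall>j<Nz. \<forall>m<M. \<forall>y.
                 ((\<lambda>s. v s i j m y) has_real_derivative v' t i j m y) (at t)"
    and v'_deriv: "\<forall>t>0. \<forall>i<Nx. \<forall>j<Nz. \<forall>m<M. \<forall>y.
                 ((\<lambda>s. v' s i j m y) has_real_derivative v'' t i j m y) (at t)"
    and scheme1: "\<forall>t>0. \<forall>i<Nx. \<forall>j<Nz. \<forall>p. Vh Nx Nz M k p \<longrightarrow>
                 eq1 Nx Nz M xs zs A (v'' t) (S t) i j p"
    and scheme2: "\<forall>t>0. \<forall>i<Nx. \<forall>j<Nz. \<forall>w. Vh2 Nx Nz M k w \<longrightarrow>
                 eq2 Nx Nz M xs zs A (v t) (S t) i j w"
  shows "\<forall>t>0. ((\<lambda>s. energy Nx Nz M xs zs (v' s) (S s)) has_real_derivative 0) (at t)"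
proof (intro allI impI)
  fix t :: real
  assume "0 < t"
  interpret ldg_solution Nx Nz M k xs zs A v v' v'' S t
    by unfold_locales (fact mesh A_C1 A_sym v_Vh S_Vh v_deriv v'_deriv scheme1 scheme2 \<open>0 < t\<close>)+
  show "((\<lambda>s. energy Nx Nz M xs zs (v' s) (S s)) has_real_derivative 0) (at t)"
    by (rule energy_has_derivative_0)
qed

end
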